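(* Let $s\ge1$, let $q$ be a prime power, let $t\in\mathbb{N}_0$, and let $C^{(1)},\ldots,C^{(s)}\in\mathbb{F}_q^{\mathbb{N}\times\mathbb{N}_0}$ be finite-row generating matrices such that for every $m>t$ and all integers $d_1,\ldots,d_s\ge0$ with $1\le d_1+\cdots+d_s\le m-t$, the vectors $(c^{(i)}_{j,0},\ldots,c^{(i)}_{j,m-1})\in\mathbb{F}_q^m$, $1\le j\le d_i$, $1\le i\le s$, are linearly independent. Let $\alpha\in\mathbb{Z}_q$ and $v\in\mathbb{N}$ with $\gcd(v,q)=1$, and set $s_n=\frac1v n+\alpha\in\mathbb{Z}_q$ ($n\ge0$). Then the sequence $\mathcal{S}$ produced by Algorithm 2 with these matrices, the input $(s_n)_{n\ge0}$ and any choice of bijections $\psi_r,\lambda_{i,j}$ is a low-discrepancy sequence, i.e. $ND_N^*(\mathcal{S})=O((\log N)^s)$ for $N\ge2$, with implied constant independent of $N$.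
   Context: $\mathbb{F}_q$ is the finite field with $q$ elements, $D_q=\{0,\ldots,q-1\}$; $\mathbb{Z}_q$ is the ring of $q$-adic integers, each $z\in\mathbb{Z}_q$ having a unique representation $z=\sum_{r\ge0}a_rq^r$, $a_r\in D_q$; since $\gcd(v,q)=1$, $v$ is a unit in $\mathbb{Z}_q$ and $\frac1v\in\mathbb{Z}_q$. A matrix $(c^{(i)}_{j,r})_{j\ge1,r\ge0}$ is finite-row if each row has finitely many nonzero entries. Algorithm 2: choose bijections $\psi_r:D_q\to\mathbb{F}_q$ ($r\ge0$), finite-row matrices $C^{(i)}=(c^{(i)}_{j,r})$, bijections $\lambda_{i,j}:\mathbb{F}_q\to D_q$ and $(s_n)$ in $\mathbb{Z}_q$; with $s_n=\sum_ra_rq^r$ put $x_n^{(i)}=\sum_{j\ge1}\lambda_{i,j}(\sum_rc^{(i)}_{j,r}\psi_r(a_r))q^{-j}$, $\boldsymbol{x}_n=(x_n^{(1)},\ldots,x_n^{(s)})\in[0,1]^s$. Star discrepancy: $D_N^*(\mathcal{S})=\sup_J|A(J)/N-\mathrm{vol}(J)|$, sup over subintervals $J\subseteq[0,1]^s$ with one vertex at the origin, $A(J)=\#\{0\le n<N:\boldsymbol{x}_n\in J\}$. *)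

theory Defs
  imports "HOL-Analysis.Analysis" "HOL-Number_Theory.Cong"
begin

text \<open>q-adic integers are represented by their digit sequences \<open>a :: nat \<Rightarrow> nat\<close>,
  \<open>z = \<Sum>r. a r * q^r\<close>, with all digits in \<open>D_q = {0..<q}\<close>.\<close>

definition qadic_digits :: "nat \<Rightarrow> (nat \<Rightarrow> nat) \<Rightarrow> bool" where
  "qadic_digits q a \<longleftrightarrow> (\<forall>r. a r < q)"

definition qadic_trunc :: "nat \<Rightarrow> (nat \<Rightarrow> nat) \<Rightarrow> nat \<Rightarrow> int" where
  "qadic_trunc q a k = (\<Sum>r<k. int (a r) * int q ^ r)"

text \<open>\<open>a\<close> is the digit sequence of the q-adic integer \<open>n/v + \<alpha>\<close>, i.e. of the unique
  \<open>z \<in> \<int>_q\<close> with \<open>v (z - \<alpha>) = n\<close>; equality in \<open>\<int>_q\<close> means congruence modulo every \<open>q^k\<close>.\<close>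
definition is_qadic_seq_term ::
    "nat \<Rightarrow> nat \<Rightarrow> (nat \<Rightarrow> nat) \<Rightarrow> nat \<Rightarrow> (nat \<Rightarrow> nat) \<Rightarrow> bool" where
  "is_qadic_seq_term q v \<alpha> n a \<longleftrightarrow> qadic_digits q a \<and>
     (\<forall>k. [int v * (qadic_trunc q a k - qadic_trunc q \<alpha> k) = int n] (mod (int q ^ k)))"

text \<open>Algorithm 2: the i-th coordinate of the n-th point, given the digits \<open>a\<close> of \<open>s_n\<close>.
  Matrices are \<open>C i j r = c^{(i)}_{j,r}\<close>; \<open>\<psi> r : D_q \<rightarrow> F_q\<close>, \<open>lam i j : F_q \<rightarrow> D_q\<close>.\<close>
definition alg2_coord ::
    "(nat \<Rightarrow> nat \<Rightarrow> nat \<Rightarrow> 'f::{field,finite}) \<Rightarrow> (nat \<Rightarrow> nat \<Rightarrow> 'f)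
     \<Rightarrow> (nat \<Rightarrow> nat \<Rightarrow> 'f \<Rightarrow> nat) \<Rightarrow> (nat \<Rightarrow> nat) \<Rightarrow> nat \<Rightarrow> real" where
  "alg2_coord C \<psi> lam a i =
     (\<Sum>j. real (lam i (Suc j) (\<Sum>r\<in>{r. C i (Suc j) r \<noteq> 0}. C i (Suc j) r * \<psi> r (a r)))
           / real CARD('f) ^ Suc j)"

definition star_discrepancy :: "nat \<Rightarrow> (nat \<Rightarrow> nat \<Rightarrow> real) \<Rightarrow> nat \<Rightarrow> real" where
  "star_discrepancy s x N =
     (SUP b\<in>{b::nat\<Rightarrow>real. \<forall>i\<in>{1..s}. 0 \<le> b i \<and> b i \<le> 1}.
        \<bar>real (card {n. n < N \<and> (\<forall>i\<in>{1..s}. x n i < b i)}) / real N - (\<Prod>i=1..s. b i)\<bar>)"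

end

theory Submission
  imports Defs
begin

text \<open>Split the first \<open>N \<le> q ^ L\<close> indices into the \<open>v\<close> residue classes \<open>n = v * w + \<rho>\<close>.
  Since \<open>v\<close> is a \<open>q\<close>-adic unit, along a class the inputs are \<open>s \<rho> + w\<close>, so their first \<open>R\<close>
  digits are the digits of the consecutive integers \<open>z + w\<close>. Prescribing the first \<open>k i\<close>
  output digits of every coordinate is a linear condition on those digits; by the linear
  independence of the rows it has exactly \<open>q ^ t\<close> solutions in every aligned block of
  \<open>q ^ (k\<^sub>1 + \<dots> + k\<^sub>s + t)\<close> consecutive integers. Hence every elementary \<open>q\<close>-adic box is hit
  with error at most \<open>2 v q ^ t\<close>. An anchored box on the grid of mesh \<open>q ^ -L\<close> is a disjoint
  union of at most \<open>((L + 1) q) ^ s\<close> elementary boxes, an arbitrary anchored box is squeezed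
  between two grid boxes at the cost of \<open>s\<close> points, and \<open>L \<approx> log\<^sub>q N\<close> gives the bound
  \<open>O((log N) ^ s)\<close>.\<close>

section \<open>Digits of natural numbers\<close>

abbreviation digit :: "nat \<Rightarrow> nat \<Rightarrow> nat \<Rightarrow> nat" where
  "digit q y r \<equiv> y div q ^ r mod q"

lemma digit_expansion_less:
  fixes q :: nat
  assumes "\<And>r. r < m \<Longrightarrow> d r < q"
  shows "(\<Sum>r<m. d r * q ^ r) < q ^ m"
  using assms
proof (induction m)
  case 0
  then show ?case by simp
next
  case (Suc m)
  have "(\<Sum>r<Suc m. d r * q ^ r) < q ^ m + d m * q ^ m"
    using Suc by simp
  also have "\<dots> \<le> q * q ^ m"
    using Suc.prems[of m] mult_right_mono[of "d m + 1" q "q ^ m"] by simp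
  finally show ?case by simp
qed

lemma digit_expansion_div_power:
  fixes q :: nat
  assumes "\<And>r. r < m \<Longrightarrow> d r < q" and "e \<le> m"
  shows "(\<Sum>r<m. d r * q ^ r) div q ^ e = (\<Sum>r<m - e. d (r + e) * q ^ r)"
proof -
  have "(\<Sum>r<m. d r * q ^ r) = (\<Sum>r<e. d r * q ^ r) + (\<Sum>r\<in>{e..<m}. d r * q ^ r)"
    using assms(2) by (simp add: lessThan_atLeast0 sum.atLeastLessThan_concat)
  also have "(\<Sum>r\<in>{e..<m}. d r * q ^ r) = (\<Sum>r<m - e. d (r + e) * q ^ (r + e))"
    using assms(2) sum.shift_bounds_nat_ivl[of "\<lambda>r. d r * q ^ r" 0 e "m - e"]
    by (simp add: lessThan_atLeast0)
  also have "\<dots> = q ^ e * (\<Sum>r<m - e. d (r + e) * q ^ r)"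
    by (simp add: sum_distrib_left power_add mult.commute mult.left_commute)
  finally have split: "(\<Sum>r<m. d r * q ^ r) = (\<Sum>r<e. d r * q ^ r) + q ^ e * (\<Sum>r<m - e. d (r + e) * q ^ r)" .
  have low: "(\<Sum>r<e. d r * q ^ r) < q ^ e"
    using assms by (intro digit_expansion_less) auto
  then have "q ^ e \<noteq> 0"
    by (metis not_less_zero)
  with low show ?thesis
    unfolding split by simp
qed

lemma digit_digit_expansion:
  fixes q :: nat
  assumes "\<And>r. r < m \<Longrightarrow> d r < q" and "e < m"
  shows "digit q (\<Sum>r<m. d r * q ^ r) e = d e"
proof -
  obtain k where k: "m - e = Suc k"
    using assms(2) by (metis Suc_diff_Suc)
  have "(\<Sum>r<m. d r * q ^ r) div q ^ e = (\<Sum>r<Suc k. d (r + e) * q ^ r)"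
    using assms k by (simp add: digit_expansion_div_power)
  also have "\<dots> = d e + q * (\<Sum>r<k. d (Suc r + e) * q ^ r)"
    by (simp only: sum.lessThan_Suc_shift) (simp add: sum_distrib_left mult_ac)
  finally show ?thesis
    using assms by simp
qed

lemma digit_expansion:
  fixes q y :: nat
  assumes "y < q ^ m" "2 \<le> q"
  shows "(\<Sum>r<m. digit q y r * q ^ r) = y"
  using assms(1)
proof (induction m arbitrary: y)
  case 0
  then show ?case by simp
next
  case (Suc m)
  have "y div q < q ^ m"
    using Suc.prems assms(2) by (simp add: div_less_iff_less_mult mult.commute)
  then have IH: "(\<Sum>r<m. digit q (y div q) r * q ^ r) = y div q"
    by (rule Suc.IH)
  have "(\<Sum>r<Suc m. digit q y r * q ^ r) = y mod q + q * (\<Sum>r<m. digit q (y div q) r * q ^ r)"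
    by (simp only: sum.lessThan_Suc_shift)
       (simp add: sum_distrib_left div_mult2_eq mult.assoc mult.left_commute)
  then show ?case
    using IH by simp
qed

lemma eq_if_digits_eq:
  fixes q y z :: nat
  assumes "2 \<le> q" "y < q ^ m" "z < q ^ m" "\<And>r. r < m \<Longrightarrow> digit q y r = digit q z r"
  shows "y = z"
proof -
  have "y = (\<Sum>r<m. digit q y r * q ^ r)"
    using digit_expansion[OF assms(2,1)] by simp
  also have "\<dots> = (\<Sum>r<m. digit q z r * q ^ r)"
    using assms(4) by (intro sum.cong) auto
  also have "\<dots> = z"
    using digit_expansion[OF assms(3,1)] .
  finally show ?thesis .
qed

lemma digit_mod_power:
  fixes x q R r :: nat
  assumes "r < R" "0 < q"
  shows "digit q (x mod q ^ R) r = digit q x r"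
proof -
  have qR: "q ^ R = q ^ r * (q * q ^ (R - r - 1))"
    using assms by (simp flip: power_add power_Suc)
  have "x = x mod q ^ R + q ^ r * (q * (q ^ (R - r - 1) * (x div q ^ R)))"
    using div_mult_mod_eq[of x "q ^ R"] unfolding qR by (simp add: mult_ac)
  then have "x div q ^ r = x mod q ^ R div q ^ r + q * (q ^ (R - r - 1) * (x div q ^ R))"
    using assms(2) by (metis add.commute div_mult_self2 power_not_zero not_gr0)
  then show ?thesis
    by simp
qed

lemma digit_add_mult_power_low:
  fixes q c y T r :: nat
  assumes "r < T" "0 < q"
  shows "digit q (c * q ^ T + y) r = digit q y r"
proof -
  have "q ^ T = q ^ r * (q * q ^ (T - r - 1))"
    using assms(1) by (simp flip: power_add power_Suc)
  then have "c * q ^ T + y = y + q ^ r * (q * (c * q ^ (T - r - 1)))"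
    by (simp add: mult_ac)
  then have "(c * q ^ T + y) div q ^ r = (y + q ^ r * (q * (c * q ^ (T - r - 1)))) div q ^ r"
    by (rule arg_cong)
  also have "\<dots> = q * (c * q ^ (T - r - 1)) + y div q ^ r"
    using assms(2) by simp
  finally have "(c * q ^ T + y) div q ^ r = q * (c * q ^ (T - r - 1)) + y div q ^ r" .
  then show ?thesis
    by simp
qed

lemma digit_add_mult_power_high:
  fixes q c y T r :: nat
  assumes "y < q ^ T" "T \<le> r" "0 < q"
  shows "digit q (c * q ^ T + y) r = digit q (c * q ^ T) r"
proof -
  have "q ^ r = q ^ T * q ^ (r - T)"
    using assms(2) by (simp flip: power_add)
  moreover have "(c * q ^ T + y) div q ^ T = c"
    using assms by (simp add: div_less)
  ultimately show ?thesis
    using assms(3) by (simp add: div_mult2_eq)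
qed

lemma mem_cell_iff_div_power:
  fixes q e a y :: nat
  assumes "0 < q"
  shows "y \<in> {a * q ^ e ..< (a + 1) * q ^ e} \<longleftrightarrow> y div q ^ e = a"
proof -
  have "y \<in> {a * q ^ e ..< (a + 1) * q ^ e} \<longleftrightarrow> a \<le> y div q ^ e \<and> y div q ^ e < a + 1"
    using assms by (simp add: less_eq_div_iff_mult_less_eq div_less_iff_less_mult)
  then show ?thesis
    by linarith
qed

lemma div_power_eq_iff_digits:
  fixes y a e L q :: nat
  assumes q: "2 \<le> q" and y: "y < q ^ L" and a: "a < q ^ (L - e)" and e: "e \<le> L"
  shows "y div q ^ e = a \<longleftrightarrow> (\<forall>r. e \<le> r \<and> r < L \<longrightarrow> digit q y r = digit q a (r - e))"
proof
  assume a_eq: "y div q ^ e = a"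
  show "\<forall>r. e \<le> r \<and> r < L \<longrightarrow> digit q y r = digit q a (r - e)"
  proof (intro allI impI)
    fix r
    assume "e \<le> r \<and> r < L"
    then have "q ^ r = q ^ e * q ^ (r - e)"
      by (simp flip: power_add)
    then show "digit q y r = digit q a (r - e)"
      by (simp add: div_mult2_eq flip: a_eq)
  qed
next
  assume h: "\<forall>r. e \<le> r \<and> r < L \<longrightarrow> digit q y r = digit q a (r - e)"
  show "y div q ^ e = a"
  proof (rule eq_if_digits_eq[OF q _ a])
    show "y div q ^ e < q ^ (L - e)"
      using y q e by (simp add: div_less_iff_less_mult flip: power_add)
    show "digit q (y div q ^ e) m = digit q a m" if "m < L - e" for m
      using h[rule_format, of "e + m"] that by (simp add: div_mult2_eq power_add)
  qed
qed

lemma digit_expansion_mem_cell_iff: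
  fixes d :: "nat \<Rightarrow> nat" and q L e a :: nat
  assumes q: "2 \<le> q" and d: "\<And>j. 1 \<le> j \<Longrightarrow> d j < q" and e: "e \<le> L" and a: "a < q ^ (L - e)"
  shows "(\<Sum>r<L. d (L - r) * q ^ r) \<in> {a * q ^ e ..< (a + 1) * q ^ e}
           \<longleftrightarrow> (\<forall>j\<in>{1..L - e}. d j = digit q a (L - e - j))"
proof -
  define y where "y = (\<Sum>r<L. d (L - r) * q ^ r)"
  have y_digit: "digit q y r = d (L - r)" if "r < L" for r
    unfolding y_def using d that by (intro digit_digit_expansion) auto
  have "y < q ^ L"
    unfolding y_def using d by (intro digit_expansion_less) auto
  have "y \<in> {a * q ^ e ..< (a + 1) * q ^ e} \<longleftrightarrow> y div q ^ e = a"
    using q by (intro mem_cell_iff_div_power) simp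
  also have "\<dots> \<longleftrightarrow> (\<forall>r. e \<le> r \<and> r < L \<longrightarrow> digit q y r = digit q a (r - e))"
    by (rule div_power_eq_iff_digits[OF q \<open>y < q ^ L\<close> a e])
  also have "\<dots> \<longleftrightarrow> (\<forall>r. e \<le> r \<and> r < L \<longrightarrow> d (L - r) = digit q a (r - e))"
    using y_digit by auto
  also have "\<dots> \<longleftrightarrow> (\<forall>j\<in>{1..L - e}. d j = digit q a (L - e - j))"
  proof
    assume h: "\<forall>r. e \<le> r \<and> r < L \<longrightarrow> d (L - r) = digit q a (r - e)"
    show "\<forall>j\<in>{1..L - e}. d j = digit q a (L - e - j)"
    proof
      fix j
      assume "j \<in> {1..L - e}"
      then have "e \<le> L - j \<and> L - j < L" "L - (L - j) = j" "L - j - e = L - e - j"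
        by auto
      then show "d j = digit q a (L - e - j)"
        using h[rule_format, of "L - j"] by simp
    qed
  next
    assume h: "\<forall>j\<in>{1..L - e}. d j = digit q a (L - e - j)"
    show "\<forall>r. e \<le> r \<and> r < L \<longrightarrow> d (L - r) = digit q a (r - e)"
    proof (intro allI impI)
      fix r
      assume "e \<le> r \<and> r < L"
      then have "L - r \<in> {1..L - e}" "L - e - (L - r) = r - e"
        by auto
      then show "d (L - r) = digit q a (r - e)"
        using h by simp
    qed
  qed
  finally show ?thesis
    unfolding y_def .
qed

section \<open>Linear systems over a finite field\<close>

lemma two_le_card_field: "2 \<le> CARD('f::{field,finite})"
proof -
  have "card {0::'f, 1} \<le> CARD('f)"
    by (rule card_mono) auto
  then show ?thesis
    by simp
qed

lemma card_eq_sum_card_fibres: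
  assumes "finite A" "finite B" "f ` A \<subseteq> B"
  shows "card A = (\<Sum>b\<in>B. card {x\<in>A. f x = b})"
  using sum.group[OF assms, of "\<lambda>_. 1::nat"] by simp

lemma sum_card_filter_swap:
  assumes "finite A" "finite B"
  shows "(\<Sum>x\<in>A. card {y\<in>B. R x y}) = (\<Sum>y\<in>B. card {x\<in>A. R x y})"
proof -
  have "card {y\<in>B. R x y} = (\<Sum>y\<in>B. if R x y then 1 else 0)" for x
    using sum.inter_filter[OF assms(2), of "\<lambda>_. 1::nat"] by simp
  moreover have "card {x\<in>A. R x y} = (\<Sum>x\<in>A. if R x y then 1 else 0)" for y
    using sum.inter_filter[OF assms(1), of "\<lambda>_. 1::nat"] by simp
  ultimately show ?thesis
    by (simp add: sum.swap[of _ A])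
qed

lemma sum_if_mem_eq:
  fixes c d :: nat
  assumes "finite P" "S \<subseteq> P"
  shows "(\<Sum>x\<in>P. if x \<in> S then c + d else d) = card S * c + card P * d"
proof -
  have "(\<Sum>x\<in>P. if x \<in> S then c + d else d) = (\<Sum>x\<in>P. (if x \<in> S then c else 0) + d)"
    by (intro sum.cong) auto
  also have "\<dots> = (\<Sum>x\<in>P. if x \<in> S then c else 0) + card P * d"
    by (simp add: sum.distrib)
  also have "(\<Sum>x\<in>P. if x \<in> S then c else 0) = card S * c"
    using sum.inter_filter[OF assms(1), of "\<lambda>_. c" "\<lambda>x. x \<in> S"] assms(2)
    by (simp add: Int_absorb2 Collect_conj_eq Int_commute[of P] flip: Int_def)
  finally show ?thesis .
qed

lemma card_affine_hyperplane:
  fixes u :: "'j \<Rightarrow> 'f::{field,finite}"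
  assumes fin: "finite I" and r0: "r0 \<in> I" "u r0 \<noteq> 0"
  shows "card {x \<in> PiE I (\<lambda>_. UNIV). (\<Sum>r\<in>I. u r * x r) = c} * CARD('f) = CARD('f) ^ card I"
proof -
  define F where "F b = {x \<in> PiE I (\<lambda>_. UNIV). (\<Sum>r\<in>I. u r * x r) = b}" for b
  have sum_upd: "(\<Sum>r\<in>I. u r * (x(r0 := y)) r) = (\<Sum>r\<in>I. u r * x r) + u r0 * (y - x r0)" for x y
  proof -
    have "(\<Sum>r\<in>I. u r * (x(r0 := y)) r) = u r0 * y + (\<Sum>r\<in>I - {r0}. u r * x r)"
      using fin r0 by (simp add: sum.remove)
    moreover have "(\<Sum>r\<in>I. u r * x r) = u r0 * x r0 + (\<Sum>r\<in>I - {r0}. u r * x r)"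
      using fin r0 by (simp add: sum.remove)
    ultimately show ?thesis
      by (simp add: algebra_simps)
  qed
  have upd_PiE: "x \<in> PiE I (\<lambda>_. UNIV) \<Longrightarrow> x(r0 := y) \<in> PiE I (\<lambda>_. UNIV)" for x y
    using r0 by (auto simp: PiE_def extensional_def)
  have shift: "bij_betw (\<lambda>x. x(r0 := x r0 + b' / u r0)) (F b) (F (b + b'))" for b b'
  proof (rule bij_betw_byWitness[where f' = "\<lambda>x. x(r0 := x r0 - b' / u r0)"])
    show "(\<lambda>x. x(r0 := x r0 + b' / u r0)) ` F b \<subseteq> F (b + b')"
    proof clarify
      fix x
      assume "x \<in> F b"
      then show "x(r0 := x r0 + b' / u r0) \<in> F (b + b')"
        using r0 upd_PiE sum_upd[of x "x r0 + b' / u r0"] by (auto simp: F_def)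
    qed
    show "(\<lambda>x. x(r0 := x r0 - b' / u r0)) ` F (b + b') \<subseteq> F b"
    proof clarify
      fix x
      assume "x \<in> F (b + b')"
      then show "x(r0 := x r0 - b' / u r0) \<in> F b"
        using r0 upd_PiE sum_upd[of x "x r0 - b' / u r0"] by (auto simp: F_def)
    qed
  qed auto
  have eq: "card (F c) = card (F 0)" for c
  proof -
    have "bij_betw (\<lambda>x. x(r0 := x r0 + c / u r0)) (F 0) (F (0 + c))"
      by (rule shift)
    then show ?thesis
      by (simp add: bij_betw_same_card)
  qed
  have "CARD('f) ^ card I = card (PiE I (\<lambda>_. UNIV::'f set))"
    using fin by (simp add: card_PiE)
  also have "\<dots> = (\<Sum>b\<in>UNIV. card (F b))"
    unfolding F_def using fin by (intro card_eq_sum_card_fibres) (auto simp: finite_PiE)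
  also have "\<dots> = CARD('f) * card (F 0)"
    by (subst sum.cong[OF refl eq]) simp
  finally show ?thesis
    using eq[of c] by (simp add: F_def mult.commute)
qed

lemma card_linear_form_zeros:
  fixes u :: "'j \<Rightarrow> 'f::{field,finite}"
  assumes "finite I"
  shows "CARD('f) * card {x \<in> PiE I (\<lambda>_. UNIV). (\<Sum>r\<in>I. u r * x r) = 0}
           = (if \<forall>r\<in>I. u r = 0 then CARD('f) * CARD('f) ^ card I else CARD('f) ^ card I)"
proof (cases "\<forall>r\<in>I. u r = 0")
  case True
  then show ?thesis
    using assms by (simp add: card_PiE)
next
  case False
  then obtain r0 where "r0 \<in> I" "u r0 \<noteq> 0"
    by blast
  then show ?thesis
    using card_affine_hyperplane[OF assms, of r0 u 0]
    by (subst if_not_P[OF False]) (simp add: mult.commute)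
qed

lemma sum_card_linear_form_zeros:
  fixes u :: "'x \<Rightarrow> 'j \<Rightarrow> 'f::{field,finite}"
  assumes P: "finite P" and I: "finite I"
  shows "CARD('f) * (\<Sum>x\<in>P. card {e \<in> PiE I (\<lambda>_. UNIV). (\<Sum>l\<in>I. u x l * e l) = 0})
           = card {x\<in>P. \<forall>l\<in>I. u x l = 0} * (CARD('f) - 1) * CARD('f) ^ card I + card P * CARD('f) ^ card I"
proof -
  have q: "CARD('f) * CARD('f) ^ card I = (CARD('f) - 1) * CARD('f) ^ card I + CARD('f) ^ card I"
    using two_le_card_field[where 'f='f] by (simp add: algebra_simps)
  have "CARD('f) * (\<Sum>x\<in>P. card {e \<in> PiE I (\<lambda>_. UNIV). (\<Sum>l\<in>I. u x l * e l) = 0})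
      = (\<Sum>x\<in>P. if x \<in> {x\<in>P. \<forall>l\<in>I. u x l = 0}
           then (CARD('f) - 1) * CARD('f) ^ card I + CARD('f) ^ card I else CARD('f) ^ card I)"
    unfolding sum_distrib_left
  proof (rule sum.cong[OF refl])
    fix x
    assume "x \<in> P"
    then show "CARD('f) * card {e \<in> PiE I (\<lambda>_. UNIV). (\<Sum>l\<in>I. u x l * e l) = 0}
        = (if x \<in> {x\<in>P. \<forall>l\<in>I. u x l = 0}
           then (CARD('f) - 1) * CARD('f) ^ card I + CARD('f) ^ card I else CARD('f) ^ card I)"
      using card_linear_form_zeros[OF I, of "u x"] q by simp
  qed
  also have "\<dots> = card {x\<in>P. \<forall>l\<in>I. u x l = 0} * (CARD('f) - 1) * CARD('f) ^ card I + card P * CARD('f) ^ card I"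
    using P by (subst sum_if_mem_eq) auto
  finally show ?thesis .
qed

definition lin_solutions ::
    "('j \<Rightarrow> nat \<Rightarrow> 'f::field) \<Rightarrow> 'j set \<Rightarrow> nat \<Rightarrow> ('j \<Rightarrow> 'f) \<Rightarrow> (nat \<Rightarrow> 'f) set" where
  "lin_solutions a J T g = {x \<in> PiE {..<T} (\<lambda>_. UNIV). \<forall>l\<in>J. (\<Sum>r<T. a l r * x r) = g l}"

lemma card_lin_solutions_eq_kernel:
  assumes x0: "x0 \<in> lin_solutions a J T g"
  shows "card (lin_solutions a J T g) = card (lin_solutions a J T (\<lambda>_. 0))"
proof -
  have "bij_betw (\<lambda>x. restrict (\<lambda>r. x r - x0 r) {..<T}) (lin_solutions a J T g) (lin_solutions a J T (\<lambda>_. 0))"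
  proof (rule bij_betw_byWitness[where f' = "\<lambda>y. restrict (\<lambda>r. y r + x0 r) {..<T}"])
    show "(\<lambda>x. restrict (\<lambda>r. x r - x0 r) {..<T}) ` lin_solutions a J T g \<subseteq> lin_solutions a J T (\<lambda>_. 0)"
      using x0 by (auto simp: lin_solutions_def right_diff_distrib sum_subtractf)
    show "(\<lambda>y. restrict (\<lambda>r. y r + x0 r) {..<T}) ` lin_solutions a J T (\<lambda>_. 0) \<subseteq> lin_solutions a J T g"
      using x0 by (auto simp: lin_solutions_def distrib_left sum.distrib)
  qed (auto simp: lin_solutions_def PiE_def extensional_def)
  then show ?thesis
    by (rule bij_betw_same_card)
qed

text \<open>Count the pairs \<open>(x, e)\<close> with \<open>e \<cdot> A x = 0\<close> in two ways: for fixed \<open>x\<close> they form a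
  hyperplane unless \<open>A x = 0\<close>, and for fixed \<open>e\<close> they form a hyperplane unless \<open>e = 0\<close>,
  because the rows of \<open>A\<close> are linearly independent.\<close>

lemma card_lin_kernel:
  fixes a :: "'j \<Rightarrow> nat \<Rightarrow> 'f::{field,finite}"
  assumes fin: "finite J"
    and indep: "\<And>e. (\<forall>r<T. (\<Sum>l\<in>J. e l * a l r) = 0) \<Longrightarrow> \<forall>l\<in>J. e l = 0"
  shows "card (lin_solutions a J T (\<lambda>_. 0)) * CARD('f) ^ card J = CARD('f) ^ T"
proof -
  define q where "q = CARD('f)"
  define P where "P = PiE {..<T} (\<lambda>_. UNIV::'f set)"
  define G where "G = PiE J (\<lambda>_. UNIV::'f set)"
  define w where "w x l = (\<Sum>r<T. a l r * x r)" for x :: "nat \<Rightarrow> 'f" and l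
  define v where "v e r = (\<Sum>l\<in>J. e l * a l r)" for e :: "'j \<Rightarrow> 'f" and r
  have finP: "finite P" and finG: "finite G"
    using fin by (simp_all add: P_def G_def finite_PiE)
  have cardP: "card P = q ^ T" and cardG: "card G = q ^ card J"
    using fin by (simp_all add: P_def G_def q_def card_PiE)
  have "{x\<in>P. \<forall>l\<in>J. w x l = 0} = lin_solutions a J T (\<lambda>_. 0)"
    by (auto simp: P_def w_def lin_solutions_def)
  then have by_x: "q * (\<Sum>x\<in>P. card {e\<in>G. (\<Sum>l\<in>J. w x l * e l) = 0})
      = card (lin_solutions a J T (\<lambda>_. 0)) * (q - 1) * q ^ card J + q ^ T * q ^ card J"
    using sum_card_linear_form_zeros[OF finP fin, where u = w] cardP by (simp add: G_def q_def)
  have "{e\<in>G. \<forall>r\<in>{..<T}. v e r = 0} = {restrict (\<lambda>_. 0) J}"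
  proof
    show "{e\<in>G. \<forall>r\<in>{..<T}. v e r = 0} \<subseteq> {restrict (\<lambda>_. 0) J}"
    proof clarify
      fix e
      assume "e \<in> G" "\<forall>r\<in>{..<T}. v e r = 0"
      then have "\<forall>l\<in>J. e l = 0"
        using indep[of e] by (simp add: v_def)
      with \<open>e \<in> G\<close> show "e = restrict (\<lambda>_. 0) J"
        by (auto simp: G_def PiE_def extensional_def fun_eq_iff)
    qed
  qed (simp add: G_def v_def)
  then have by_e: "q * (\<Sum>e\<in>G. card {x\<in>P. (\<Sum>r\<in>{..<T}. v e r * x r) = 0})
      = (q - 1) * q ^ T + q ^ card J * q ^ T"
    using sum_card_linear_form_zeros[OF finG finite_lessThan, where u = v] cardG by (simp add: P_def q_def)
  have "(\<Sum>l\<in>J. w x l * e l) = (\<Sum>r<T. v e r * x r)" for e x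
    unfolding w_def v_def by (simp add: sum_distrib_left sum_distrib_right mult_ac sum.swap[of _ J])
  then have "(\<Sum>x\<in>P. card {e\<in>G. (\<Sum>l\<in>J. w x l * e l) = 0})
      = (\<Sum>e\<in>G. card {x\<in>P. (\<Sum>r\<in>{..<T}. v e r * x r) = 0})"
    using sum_card_filter_swap[OF finP finG, of "\<lambda>x e. (\<Sum>l\<in>J. w x l * e l) = 0"] by simp
  then have "card (lin_solutions a J T (\<lambda>_. 0)) * (q - 1) * q ^ card J + q ^ T * q ^ card J
      = (q - 1) * q ^ T + q ^ card J * q ^ T"
    using by_x by_e by metis
  then have "q \<le> 1 \<or> card (lin_solutions a J T (\<lambda>_. 0)) * q ^ card J = q ^ T"
    by (simp add: mult_ac)
  then show ?thesis
    using two_le_card_field[where 'f='f] by (auto simp: q_def)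
qed

lemma card_lin_solutions:
  fixes a :: "'j \<Rightarrow> nat \<Rightarrow> 'f::{field,finite}"
  assumes fin: "finite J"
    and indep: "\<And>e. (\<forall>r<T. (\<Sum>l\<in>J. e l * a l r) = 0) \<Longrightarrow> \<forall>l\<in>J. e l = 0"
  shows "card (lin_solutions a J T g) * CARD('f) ^ card J = CARD('f) ^ T"
proof -
  define q where "q = CARD('f)"
  define k where "k = card (lin_solutions a J T (\<lambda>_. 0))"
  define G where "G = PiE J (\<lambda>_. UNIV::'f set)"
  have kq: "k * q ^ card J = q ^ T"
    unfolding k_def q_def by (rule card_lin_kernel[OF fin indep])
  have q_pos: "0 < q"
    using two_le_card_field[where 'f='f] by (simp add: q_def)
  have k_pos: "0 < k"
    using kq q_pos by (cases k) auto
  have fibre: "card (lin_solutions a J T h) = (if lin_solutions a J T h = {} then 0 else k)" for h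
    using card_lin_solutions_eq_kernel[of _ a J T h] by (auto simp: k_def)
  have finG: "finite G" and cardG: "card G = q ^ card J"
    using fin by (simp_all add: G_def q_def finite_PiE card_PiE)
  have "q ^ T = card (PiE {..<T} (\<lambda>_. UNIV::'f set))"
    by (simp add: q_def card_PiE)
  also have "\<dots> = (\<Sum>h\<in>G. card {x\<in>PiE {..<T} (\<lambda>_. UNIV). restrict (\<lambda>l. \<Sum>r<T. a l r * x r) J = h})"
    using finG by (intro card_eq_sum_card_fibres) (auto simp: G_def finite_PiE)
  also have "\<dots> = (\<Sum>h\<in>G. card (lin_solutions a J T h))"
    by (intro sum.cong refl arg_cong[where f = card])
       (auto simp: G_def lin_solutions_def PiE_def extensional_def fun_eq_iff)
  finally have partition: "q ^ T = (\<Sum>h\<in>G. card (lin_solutions a J T h))" .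
  have nonempty: "lin_solutions a J T h \<noteq> {}" if h: "h \<in> G" for h
  proof
    assume empty: "lin_solutions a J T h = {}"
    have "q ^ T = (\<Sum>h'\<in>G - {h}. card (lin_solutions a J T h'))"
      using partition h finG empty by (simp add: sum.remove)
    also have "\<dots> \<le> (\<Sum>h'\<in>G - {h}. k)"
      using fibre by (intro sum_mono) simp
    also have "\<dots> = (q ^ card J - 1) * k"
      using h finG cardG by simp
    also have "\<dots> < q ^ card J * k"
      using k_pos q_pos by (simp add: diff_mult_distrib)
    finally show False
      using kq by (simp add: mult.commute)
  qed
  have "lin_solutions a J T g = lin_solutions a J T (restrict g J)"
    by (simp add: lin_solutions_def)
  moreover have "restrict g J \<in> G"
    by (simp add: G_def)
  ultimately show ?thesis
    using nonempty fibre kq by (simp add: q_def)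
qed

section \<open>Counting with periodic block patterns\<close>

lemma card_less_add:
  fixes a W :: nat
  shows "card {z. z < a + W \<and> \<Phi> z} = card {z. z < a \<and> \<Phi> z} + card {w. w < W \<and> \<Phi> (a + w)}"
proof -
  have "{z. z < a + W \<and> \<Phi> z} = {z. z < a \<and> \<Phi> z} \<union> (\<lambda>w. a + w) ` {w. w < W \<and> \<Phi> (a + w)}"
  proof (intro set_eqI iffI)
    fix z
    assume z: "z \<in> {z. z < a + W \<and> \<Phi> z}"
    show "z \<in> {z. z < a \<and> \<Phi> z} \<union> (\<lambda>w. a + w) ` {w. w < W \<and> \<Phi> (a + w)}"
    proof (cases "z < a")
      case False
      then have "z = a + (z - a)"
        by simp
      then show ?thesis
        using z by (metis (mono_tags, lifting) UnI2 add_less_cancel_left image_eqI mem_Collect_eq)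
    qed (use z in simp)
  qed auto
  moreover have "card ((\<lambda>w. a + w) ` {w. w < W \<and> \<Phi> (a + w)}) = card {w. w < W \<and> \<Phi> (a + w)}"
    by (simp add: card_image)
  moreover have "{z. z < a \<and> \<Phi> z} \<inter> (\<lambda>w. a + w) ` {w. w < W \<and> \<Phi> (a + w)} = {}"
    by auto
  ultimately show ?thesis
    by (simp add: card_Un_disjoint)
qed

lemma card_less_mult_if_blocks:
  fixes Q M :: nat
  assumes blocks: "\<And>c. card {y. y < Q \<and> \<Phi> (c * Q + y)} = M"
  shows "card {z. z < c * Q \<and> \<Phi> z} = c * M"
proof (induction c)
  case (Suc c)
  then show ?case
    using card_less_add[of "c * Q" Q \<Phi>] blocks[of c] by (simp add: add.commute)
qed simp

lemma card_initial_segment_if_blocks: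
  fixes Q M :: nat
  assumes blocks: "\<And>c. card {y. y < Q \<and> \<Phi> (c * Q + y)} = M" and Q: "0 < Q"
  shows "\<bar>real (card {z. z < Z \<and> \<Phi> z}) - real Z * M / Q\<bar> \<le> M"
proof -
  define c where "c = Z div Q"
  have lo: "c * Q \<le> Z" and hi: "Z < Suc c * Q"
    using dividend_less_times_div[OF Q, of Z] by (simp_all add: c_def mult.commute)
  have "c * M = card {z. z < c * Q \<and> \<Phi> z}"
    by (simp add: card_less_mult_if_blocks[OF blocks])
  also have "\<dots> \<le> card {z. z < Z \<and> \<Phi> z}"
    using lo by (intro card_mono) auto
  finally have "c * M \<le> card {z. z < Z \<and> \<Phi> z}" .
  moreover have "card {z. z < Z \<and> \<Phi> z} \<le> card {z. z < Suc c * Q \<and> \<Phi> z}"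
    using hi by (intro card_mono) auto
  then have "card {z. z < Z \<and> \<Phi> z} \<le> Suc c * M"
    by (simp only: card_less_mult_if_blocks[OF blocks])
  moreover have "real c * M \<le> real Z * M / Q" "real Z * M / Q \<le> (real c + 1) * M"
  proof -
    have "real (c * Q) \<le> real Z" "real Z \<le> real (Suc c * Q)"
      using lo hi by (simp_all only: of_nat_le_iff less_imp_le)
    then have "real c * Q \<le> Z" "real Z \<le> (real c + 1) * Q"
      by (simp_all add: algebra_simps)
    then have "real c * Q * M \<le> real Z * M" "real Z * M \<le> (real c + 1) * Q * M"
      by (simp_all add: mult_right_mono)
    then show "real c * M \<le> real Z * M / Q" "real Z * M / Q \<le> (real c + 1) * M"
      using Q by (simp_all add: field_simps)
  qed
  ultimately show ?thesis
    by (simp add: abs_le_iff algebra_simps flip: of_nat_mult of_nat_le_iff)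
qed

lemma card_interval_if_blocks:
  fixes Q M :: nat
  assumes blocks: "\<And>c. card {y. y < Q \<and> \<Phi> (c * Q + y)} = M" and Q: "0 < Q"
  shows "\<bar>real (card {w. w < W \<and> \<Phi> (a + w)}) - real W * M / Q\<bar> \<le> 2 * M"
proof -
  have "\<bar>real (card {z. z < a + W \<and> \<Phi> z}) - real (a + W) * M / Q\<bar> \<le> M"
    and "\<bar>real (card {z. z < a \<and> \<Phi> z}) - real a * M / Q\<bar> \<le> M"
    using card_initial_segment_if_blocks[OF blocks Q] by blast+
  moreover have "real (a + W) * M / Q = real a * M / Q + real W * M / Q"
    by (simp add: add_divide_distrib algebra_simps)
  ultimately show ?thesis
    unfolding card_less_add[of a W] of_nat_add abs_le_iff by linarith
qed

section \<open>Elementary intervals and box errors\<close>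

definition elementary_interval :: "nat \<Rightarrow> nat \<Rightarrow> nat set \<Rightarrow> bool" where
  "elementary_interval q L S \<longleftrightarrow>
     (\<exists>e a. e \<le> L \<and> a < q ^ (L - e) \<and> S = {a * q ^ e ..< (a + 1) * q ^ e})"

text \<open>The cells of level \<open>e\<close> are the \<open>q\<close>-adic intervals of length \<open>q ^ e\<close> between
  \<open>q ^ (e + 1) * (U div q ^ (e + 1))\<close> and \<open>q ^ e * (U div q ^ e)\<close>; there are fewer than \<open>q\<close>
  of them, and together they tile \<open>{..<U}\<close>.\<close>

definition initial_segment_cells :: "nat \<Rightarrow> nat \<Rightarrow> nat \<Rightarrow> nat set set" where
  "initial_segment_cells q L U = (\<lambda>(e, a). {a * q ^ e ..< (a + 1) * q ^ e}) `
     {(e, a). e \<le> L \<and> q * (U div q ^ (e + 1)) \<le> a \<and> a < U div q ^ e}"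

lemma power_mult_div_power_antimono:
  fixes q U :: nat
  assumes "m \<le> n"
  shows "q ^ n * (U div q ^ n) \<le> q ^ m * (U div q ^ m)"
  using assms
proof (induction n rule: dec_induct)
  case (step n)
  have "U div q ^ Suc n = U div q ^ n div q"
    by (simp only: power_Suc2 div_mult2_eq)
  then have "q ^ Suc n * (U div q ^ Suc n) = q ^ n * (q * (U div q ^ n div q))"
    by (simp add: mult_ac power_Suc2)
  also have "\<dots> \<le> q ^ n * (U div q ^ n)"
    by (simp add: mult.commute)
  finally show ?case
    using step.IH by linarith
qed simp

lemma finite_initial_segment_cells: "finite (initial_segment_cells q L U)"
proof -
  have "{(e, a). e \<le> L \<and> q * (U div q ^ (e + 1)) \<le> a \<and> a < U div q ^ e}
      \<subseteq> Sigma {..L} (\<lambda>e. {..<U div q ^ e})"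
    by auto
  then have "finite {(e, a). e \<le> L \<and> q * (U div q ^ (e + 1)) \<le> a \<and> a < U div q ^ e}"
    by (rule finite_subset) auto
  then show ?thesis
    unfolding initial_segment_cells_def by (rule finite_imageI)
qed

lemma card_initial_segment_cells_le:
  assumes "0 < q"
  shows "card (initial_segment_cells q L U) \<le> (L + 1) * q"
proof -
  define I where "I e = {q * (U div q ^ (e + 1)) ..< U div q ^ e}" for e
  have sub: "{(e, a). e \<le> L \<and> q * (U div q ^ (e + 1)) \<le> a \<and> a < U div q ^ e} \<subseteq> Sigma {..L} I"
    by (auto simp: I_def)
  have fin: "finite {(e, a). e \<le> L \<and> q * (U div q ^ (e + 1)) \<le> a \<and> a < U div q ^ e}"
    by (rule finite_subset[OF sub]) (simp add: I_def)
  have "card (initial_segment_cells q L U) \<le> card (Sigma {..L} I)"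
    unfolding initial_segment_cells_def
    by (rule order_trans[OF card_image_le[OF fin] card_mono[OF _ sub]]) (simp add: I_def)
  also have "\<dots> = (\<Sum>e\<le>L. card (I e))"
    by (simp add: I_def card_SigmaI)
  also have "\<dots> \<le> (\<Sum>e\<le>L. q)"
  proof (rule sum_mono)
    fix e
    have "U div q ^ (e + 1) = U div q ^ e div q"
      by (simp only: Suc_eq_plus1[symmetric] power_Suc2 div_mult2_eq)
    then have "card (I e) = U div q ^ e mod q"
      by (simp add: I_def minus_div_mult_eq_mod[symmetric] mult.commute)
    also have "\<dots> \<le> q"
      using assms by simp
    finally show "card (I e) \<le> q" .
  qed
  finally show ?thesis
    by simp
qed

lemma elementary_interval_initial_segment_cells:
  assumes "0 < q" "U \<le> q ^ L" "c \<in> initial_segment_cells q L U"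
  shows "elementary_interval q L c"
proof -
  obtain e a where ea: "e \<le> L" "a < U div q ^ e" "c = {a * q ^ e ..< (a + 1) * q ^ e}"
    using assms(3) by (auto simp: initial_segment_cells_def)
  have "a < q ^ L div q ^ e"
    using ea(2) div_le_mono[OF assms(2)] by (rule less_le_trans)
  also have "\<dots> = q ^ (L - e)"
    using assms(1) ea(1) by (simp add: power_diff)
  finally show ?thesis
    using ea unfolding elementary_interval_def by blast
qed

lemma Union_initial_segment_cells:
  assumes q: "2 \<le> q" and U: "U \<le> q ^ L"
  shows "\<Union>(initial_segment_cells q L U) = {..<U}"
proof (intro set_eqI iffI)
  fix y
  assume "y \<in> \<Union>(initial_segment_cells q L U)"
  then obtain e a where ea: "q * (U div q ^ (e + 1)) \<le> a" "a < U div q ^ e"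
    and y: "y < (a + 1) * q ^ e"
    by (auto simp: initial_segment_cells_def)
  have "(a + 1) * q ^ e \<le> U div q ^ e * q ^ e"
    using ea(2) by (intro mult_right_mono) auto
  with y show "y \<in> {..<U}"
    using div_times_less_eq_dividend[of U "q ^ e"] unfolding lessThan_iff by linarith
next
  fix y
  assume y: "y \<in> {..<U}"
  define A where "A e = q ^ e * (U div q ^ e)" for e
  define e0 where "e0 = (LEAST e. A e \<le> y)"
  have "q ^ L < q ^ Suc L"
    using q by simp
  then have "U < q ^ Suc L"
    using U by linarith
  then have "A (Suc L) \<le> y"
    by (simp add: A_def)
  then have e0: "A e0 \<le> y" "e0 \<le> Suc L"
    unfolding e0_def by (auto intro: LeastI Least_le)
  have "e0 \<noteq> 0"
    using e0(1) y by (cases e0) (auto simp: A_def)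
  then obtain e where e: "e0 = Suc e"
    using not0_implies_Suc by blast
  have "\<not> A e \<le> y"
    using not_less_Least[of e "\<lambda>e. A e \<le> y"] e unfolding e0_def by auto
  have "e \<le> L"
    using e e0(2) by simp
  define a where "a = y div q ^ e"
  have qe: "0 < q ^ e"
    using q by simp
  have "q * (U div q ^ (e + 1)) * q ^ e \<le> y"
    using e0(1) e by (simp add: A_def mult_ac)
  then have "q * (U div q ^ (e + 1)) \<le> a"
    using qe by (simp add: a_def less_eq_div_iff_mult_less_eq)
  moreover have "y < U div q ^ e * q ^ e"
    using \<open>\<not> A e \<le> y\<close> by (simp add: A_def mult.commute)
  then have "a < U div q ^ e"
    using qe by (simp add: a_def div_less_iff_less_mult)
  moreover have "y \<in> {a * q ^ e ..< (a + 1) * q ^ e}"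
    using q by (intro mem_cell_iff_div_power[THEN iffD2]) (simp_all add: a_def)
  ultimately show "y \<in> \<Union>(initial_segment_cells q L U)"
    using \<open>e \<le> L\<close> unfolding initial_segment_cells_def by blast
qed

lemma disjoint_initial_segment_cells:
  assumes q: "0 < q"
  shows "disjoint (initial_segment_cells q L U)"
proof -
  define blk where "blk = (\<lambda>(e, a). {a * q ^ e ..< (a + 1) * q ^ e :: nat})"
  define Ix where "Ix = {(e, a). e \<le> L \<and> q * (U div q ^ (e + 1)) \<le> a \<and> a < U div q ^ e}"
  have no_overlap_across_levels: False
    if "y \<in> blk (e1, a1)" "y \<in> blk (e2, a2)" "(e1, a1) \<in> Ix" "(e2, a2) \<in> Ix" "e1 < e2"
    for y e1 a1 e2 a2
  proof -
    have "y < (a2 + 1) * q ^ e2"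
      using that(2) by (simp add: blk_def)
    also have "\<dots> \<le> U div q ^ e2 * q ^ e2"
      using that(4) by (intro mult_le_mono1) (simp add: Ix_def)
    also have "\<dots> \<le> q ^ (e1 + 1) * (U div q ^ (e1 + 1))"
      using power_mult_div_power_antimono[of "e1 + 1" e2 q U] that(5) by (simp add: mult.commute)
    also have "\<dots> = q * (U div q ^ (e1 + 1)) * q ^ e1"
      by (simp add: mult_ac)
    also have "\<dots> \<le> a1 * q ^ e1"
      using that(3) by (intro mult_le_mono1) (simp add: Ix_def)
    also have "\<dots> \<le> y"
      using that(1) by (simp add: blk_def)
    finally show False
      by simp
  qed
  have "blk (e, a) = blk (e', a')" if "y \<in> blk (e, a)" "y \<in> blk (e', a')"
    "(e, a) \<in> Ix" "(e', a') \<in> Ix" for y e a e' a'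
  proof -
    have "e = e'"
      using no_overlap_across_levels[OF that] no_overlap_across_levels[OF that(2,1,4,3)]
      by (cases e e' rule: linorder_cases) auto
    moreover have "a = a'"
      using that(1,2) mem_cell_iff_div_power[OF q] \<open>e = e'\<close> by (simp add: blk_def)
    ultimately show ?thesis
      by simp
  qed
  then show ?thesis
    unfolding disjoint_def initial_segment_cells_def blk_def[symmetric] Ix_def[symmetric]
    by (auto simp: disjnt_def pairwise_def) metis+
qed

definition box_points :: "nat \<Rightarrow> nat \<Rightarrow> (nat \<Rightarrow> nat \<Rightarrow> nat) \<Rightarrow> (nat \<Rightarrow> nat set) \<Rightarrow> nat set" where
  "box_points s N Y S = {n. n < N \<and> (\<forall>i\<in>{1..s}. Y i n \<in> S i)}"

definition box_error :: "nat \<Rightarrow> nat \<Rightarrow> nat \<Rightarrow> (nat \<Rightarrow> nat \<Rightarrow> nat) \<Rightarrow> (nat \<Rightarrow> nat set) \<Rightarrow> real" where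
  "box_error s Q N Y S = real (card (box_points s N Y S)) - real N * (\<Prod>i=1..s. real (card (S i)) / real Q)"

lemma box_points_split:
  assumes i0: "i0 \<in> {1..s}" and Cs: "\<Union>Cs = S i0"
  shows "box_points s N Y S = (\<Union>c\<in>Cs. box_points s N Y (S(i0 := c)))"
proof (intro set_eqI iffI)
  fix n
  assume n: "n \<in> box_points s N Y S"
  then have "Y i0 n \<in> \<Union>Cs"
    using i0 Cs by (auto simp: box_points_def)
  then obtain c where "c \<in> Cs" "Y i0 n \<in> c"
    by blast
  then show "n \<in> (\<Union>c\<in>Cs. box_points s N Y (S(i0 := c)))"
    using n by (auto simp: box_points_def)
next
  fix n
  assume "n \<in> (\<Union>c\<in>Cs. box_points s N Y (S(i0 := c)))"
  then obtain c where c: "c \<in> Cs" and n: "n < N" "\<forall>i\<in>{1..s}. Y i n \<in> (S(i0 := c)) i"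
    by (auto simp: box_points_def)
  have "c \<subseteq> S i0"
    using c Cs by blast
  have "Y i n \<in> S i" if "i \<in> {1..s}" for i
  proof -
    have "Y i n \<in> (S(i0 := c)) i"
      using n(2) that by blast
    then show ?thesis
      using \<open>c \<subseteq> S i0\<close> by (cases "i = i0") auto
  qed
  then show "n \<in> box_points s N Y S"
    using n(1) by (simp add: box_points_def)
qed

lemma card_box_points_split:
  assumes i0: "i0 \<in> {1..s}" and fin: "finite Cs" and Cs: "disjoint Cs" "\<Union>Cs = S i0"
  shows "card (box_points s N Y S) = (\<Sum>c\<in>Cs. card (box_points s N Y (S(i0 := c))))"
proof -
  have "box_points s N Y (S(i0 := c)) \<inter> box_points s N Y (S(i0 := c')) = {}"
    if "c \<in> Cs" "c' \<in> Cs" "c \<noteq> c'" for c c'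
  proof -
    have "c \<inter> c' = {}"
      using Cs(1) that by (auto simp: disjoint_def pairwise_def disjnt_def)
    moreover have "Y i0 n \<in> c" if "n \<in> box_points s N Y (S(i0 := c))" for n c
      using that i0 unfolding box_points_def by fastforce
    ultimately show ?thesis
      by blast
  qed
  then show ?thesis
    unfolding box_points_split[where S = S, OF i0 Cs(2)] using fin by (simp add: card_UN_disjoint box_points_def)
qed

lemma box_error_split:
  assumes i0: "i0 \<in> {1..s}" and fin: "finite Cs" "finite (S i0)"
    and Cs: "disjoint Cs" "\<Union>Cs = S i0"
  shows "box_error s Q N Y S = (\<Sum>c\<in>Cs. box_error s Q N Y (S(i0 := c)))"
proof -
  define R where "R = (\<Prod>i\<in>{1..s} - {i0}. real (card (S i)) / real Q)"
  have prod_upd: "(\<Prod>i=1..s. real (card ((S(i0 := c)) i)) / real Q) = real (card c) / real Q * R" for c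
  proof -
    have "(\<Prod>i\<in>{1..s} - {i0}. real (card ((S(i0 := c)) i)) / real Q) = R"
      unfolding R_def by (rule prod.cong) auto
    then show ?thesis
      using i0 by (simp add: prod.remove)
  qed
  have card_S: "card (S i0) = (\<Sum>c\<in>Cs. card c)"
    using card_Union_disjoint[OF Cs(1)] Cs(2) fin(2) by (metis Union_upper finite_subset)
  have "real N * (\<Prod>i=1..s. real (card (S i)) / real Q) = real N * (real (card (S i0)) / real Q * R)"
    using prod_upd[of "S i0"] by simp
  also have "\<dots> = (\<Sum>c\<in>Cs. real N * (real (card c) / real Q * R))"
    by (simp add: card_S sum_distrib_left sum_distrib_right sum_divide_distrib)
  also have "\<dots> = (\<Sum>c\<in>Cs. real N * (\<Prod>i=1..s. real (card ((S(i0 := c)) i)) / real Q))"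
    by (simp only: prod_upd)
  finally have "real N * (\<Prod>i=1..s. real (card (S i)) / real Q)
      = (\<Sum>c\<in>Cs. real N * (\<Prod>i=1..s. real (card ((S(i0 := c)) i)) / real Q))" .
  with card_box_points_split[where S = S, OF i0 fin(1) Cs] show ?thesis
    by (simp add: box_error_def sum_subtractf)
qed

lemma box_error_bound_induct:
  fixes q L N s :: nat and B :: real
  assumes q: "2 \<le> q" and B: "0 \<le> B"
    and cell: "\<And>S. \<forall>i\<in>{1..s}. elementary_interval q L (S i) \<Longrightarrow> \<bar>box_error s (q ^ L) N Y S\<bar> \<le> B"
    and I: "finite I" "I \<subseteq> {1..s}"
  shows "\<forall>i\<in>{1..s} - I. elementary_interval q L (S i) \<Longrightarrow> \<forall>i\<in>I. \<exists>u\<le>q ^ L. S i = {..<u} \<Longrightarrow>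
    \<bar>box_error s (q ^ L) N Y S\<bar> \<le> B * real ((L + 1) * q) ^ card I"
  using I
proof (induction I arbitrary: S rule: finite_subset_induct)
  case empty
  then show ?case
    using cell by simp
next
  case (insert i0 I)
  obtain u where u: "u \<le> q ^ L" "S i0 = {..<u}"
    using insert.prems(2) by auto
  define Cs where "Cs = initial_segment_cells q L u"
  have Cs: "finite Cs" "disjoint Cs" "\<Union>Cs = S i0" "card Cs \<le> (L + 1) * q"
    using q u finite_initial_segment_cells disjoint_initial_segment_cells
      Union_initial_segment_cells card_initial_segment_cells_le
    by (simp_all add: Cs_def)
  have IH: "\<bar>box_error s (q ^ L) N Y (S(i0 := c))\<bar> \<le> B * real ((L + 1) * q) ^ card I" if "c \<in> Cs" for c
  proof (rule insert.IH)
    show "\<forall>i\<in>{1..s} - I. elementary_interval q L ((S(i0 := c)) i)"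
      using insert.prems(1) elementary_interval_initial_segment_cells[of q u L c] q u that
      by (auto simp: Cs_def)
    show "\<forall>i\<in>I. \<exists>u\<le>q ^ L. (S(i0 := c)) i = {..<u}"
      using insert.prems(2) insert.hyps by auto
  qed
  have "\<bar>box_error s (q ^ L) N Y S\<bar> \<le> (\<Sum>c\<in>Cs. \<bar>box_error s (q ^ L) N Y (S(i0 := c))\<bar>)"
    using box_error_split[of i0 s Cs S] insert.hyps Cs u by (simp add: sum_abs)
  also have "\<dots> \<le> real (card Cs) * (B * real ((L + 1) * q) ^ card I)"
    using sum_mono[OF IH] by simp
  also have "\<dots> \<le> real ((L + 1) * q) * (B * real ((L + 1) * q) ^ card I)"
    using of_nat_mono[OF Cs(4)] B by (intro mult_right_mono) simp_all
  finally show ?case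
    using insert.hyps by (simp add: mult_ac)
qed

lemma box_error_initial_segments:
  fixes q L N s :: nat and B :: real
  assumes "2 \<le> q" "0 \<le> B"
    and "\<And>S. \<forall>i\<in>{1..s}. elementary_interval q L (S i) \<Longrightarrow> \<bar>box_error s (q ^ L) N Y S\<bar> \<le> B"
    and "\<forall>i\<in>{1..s}. U i \<le> q ^ L"
  shows "\<bar>box_error s (q ^ L) N Y (\<lambda>i. {..<U i})\<bar> \<le> B * real ((L + 1) * q) ^ s"
  using box_error_bound_induct[OF assms(1-3), of "{1..s}" "\<lambda>i. {..<U i}"] assms(4) by auto

section \<open>The input sequence\<close>

text \<open>Because \<open>v\<close> is invertible modulo \<open>q ^ R\<close>, the congruences defining the two terms give
  \<open>s (v * w + \<rho>) \<equiv> s \<rho> + w (mod q ^ R)\<close>.\<close>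

lemma qadic_seq_term_digit:
  fixes q v n \<rho> w R r :: nat and a b \<alpha> :: "nat \<Rightarrow> nat"
  assumes q: "2 \<le> q" and cop: "coprime v q"
    and a: "is_qadic_seq_term q v \<alpha> n a" and b: "is_qadic_seq_term q v \<alpha> \<rho> b"
    and n: "n = v * w + \<rho>" and r: "r < R"
  shows "a r = digit q ((\<Sum>r<R. b r * q ^ r) + w) r"
proof -
  define A where "A = (\<Sum>r<R. a r * q ^ r)"
  define B where "B = (\<Sum>r<R. b r * q ^ r)"
  have "[int v * (int A - qadic_trunc q \<alpha> R) = int n] (mod int q ^ R)"
    and "[int v * (int B - qadic_trunc q \<alpha> R) = int \<rho>] (mod int q ^ R)"
    using a b by (simp_all add: is_qadic_seq_term_def qadic_trunc_def A_def B_def)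
  then have "[int v * (int A - int B) = int v * int w] (mod int q ^ R)"
    using cong_diff n by (fastforce simp: algebra_simps)
  moreover have "coprime (int v) (int q ^ R)"
    using cop by simp
  ultimately have "[int A - int B = int w] (mod int q ^ R)"
    using cong_mult_lcancel by blast
  from cong_add[OF this cong_refl[of "int B"]] have "[int A = int (B + w)] (mod int (q ^ R))"
    by (simp add: algebra_simps)
  then have "[A = B + w] (mod q ^ R)"
    by (simp only: cong_int_iff)
  moreover have "A < q ^ R"
    using a unfolding A_def
    by (intro digit_expansion_less) (auto simp: is_qadic_seq_term_def qadic_digits_def)
  ultimately have "A = (B + w) mod q ^ R"
    by (simp add: cong_def)
  have "a r = digit q A r"
    using a r unfolding A_def
    by (intro digit_digit_expansion[symmetric]) (auto simp: is_qadic_seq_term_def qadic_digits_def)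
  also have "\<dots> = digit q (B + w) r"
    using \<open>A = (B + w) mod q ^ R\<close> digit_mod_power[OF r] q by simp
  finally show ?thesis
    unfolding B_def .
qed

lemma bij_betw_digit_vectors:
  fixes \<psi> :: "nat \<Rightarrow> nat \<Rightarrow> 'f::{field,finite}"
  assumes psi: "\<And>r. bij_betw (\<psi> r) {..<CARD('f)} UNIV"
  shows "bij_betw (\<lambda>y. restrict (\<lambda>r. \<psi> r (digit CARD('f) y r)) {..<T})
           {..<CARD('f) ^ T} (PiE {..<T} (\<lambda>_. UNIV))"
proof -
  define q where "q = CARD('f)"
  define E where "E y = restrict (\<lambda>r. \<psi> r (digit q y r)) {..<T}" for y
  have q2: "2 \<le> q"
    unfolding q_def by (rule two_le_card_field)
  have inj: "inj_on E {..<q ^ T}"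
  proof
    fix y z
    assume yz: "y \<in> {..<q ^ T}" "z \<in> {..<q ^ T}" "E y = E z"
    have "digit q y r = digit q z r" if "r < T" for r
    proof -
      have "\<psi> r (digit q y r) = \<psi> r (digit q z r)"
        using fun_cong[OF yz(3), of r] that by (simp add: E_def)
      moreover have "inj_on (\<psi> r) {..<q}"
        using psi[of r] by (simp add: q_def bij_betw_def)
      ultimately show ?thesis
        using q2 by (simp add: inj_on_eq_iff)
    qed
    then show "y = z"
      using eq_if_digits_eq[OF q2] yz by simp
  qed
  moreover have "E ` {..<q ^ T} = PiE {..<T} (\<lambda>_. UNIV)"
  proof (rule card_subset_eq)
    show "E ` {..<q ^ T} \<subseteq> PiE {..<T} (\<lambda>_. UNIV)"
      unfolding E_def by (intro image_subsetI, subst restrict_PiE_iff, simp)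
    show "card (E ` {..<q ^ T}) = card (PiE {..<T} (\<lambda>_. UNIV :: 'f set))"
      using card_image[OF inj] by (simp add: q_def card_PiE)
  qed (simp add: finite_PiE)
  ultimately show ?thesis
    unfolding bij_betw_def E_def q_def by blast
qed

text \<open>The \<open>T\<close> low digits of the elements of a block of length \<open>q ^ T\<close> run through all digit
  vectors, hence (via the bijections \<open>\<psi>\<close>) through all of \<open>F ^ T\<close>, while the high digits are
  constant on the block; the condition thus becomes a linear system with independent rows.\<close>

lemma card_block_solutions:
  fixes C :: "'j \<Rightarrow> nat \<Rightarrow> 'f::{field,finite}" and \<psi> :: "nat \<Rightarrow> nat \<Rightarrow> 'f" and f :: "'j \<Rightarrow> 'f"
  assumes finJ: "finite J"
    and psi: "\<And>r. bij_betw (\<psi> r) {..<CARD('f)} UNIV"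
    and indep: "\<And>e. (\<forall>r<card J + t. (\<Sum>l\<in>J. e l * C l r) = 0) \<Longrightarrow> \<forall>l\<in>J. e l = 0"
    and R: "card J + t \<le> R"
  shows "card {y. y < CARD('f) ^ (card J + t) \<and>
           (\<forall>l\<in>J. (\<Sum>r<R. C l r * \<psi> r (digit CARD('f) (c * CARD('f) ^ (card J + t) + y) r)) = f l)}
         = CARD('f) ^ t"
proof -
  define q where "q = CARD('f)"
  define T where "T = card J + t"
  have q2: "2 \<le> q"
    unfolding q_def by (rule two_le_card_field)
  define h where "h l = (\<Sum>r\<in>{T..<R}. C l r * \<psi> r (digit q (c * q ^ T) r))" for l
  have split: "(\<Sum>r<R. C l r * \<psi> r (digit q (c * q ^ T + y) r)) = (\<Sum>r<T. C l r * \<psi> r (digit q y r)) + h l"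
    if y: "y < q ^ T" for l y
  proof -
    have "(\<Sum>r<R. C l r * \<psi> r (digit q (c * q ^ T + y) r))
        = (\<Sum>r<T. C l r * \<psi> r (digit q (c * q ^ T + y) r)) + (\<Sum>r\<in>{T..<R}. C l r * \<psi> r (digit q (c * q ^ T + y) r))"
      using R by (simp add: T_def lessThan_atLeast0 sum.atLeastLessThan_concat)
    also have "(\<Sum>r<T. C l r * \<psi> r (digit q (c * q ^ T + y) r)) = (\<Sum>r<T. C l r * \<psi> r (digit q y r))"
      using q2 by (intro sum.cong) (simp_all add: digit_add_mult_power_low)
    also have "(\<Sum>r\<in>{T..<R}. C l r * \<psi> r (digit q (c * q ^ T + y) r)) = h l"
      unfolding h_def using q2 y by (intro sum.cong) (simp_all add: digit_add_mult_power_high)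
    finally show ?thesis .
  qed
  define E where "E y = restrict (\<lambda>r. \<psi> r (digit q y r)) {..<T}" for y
  have "bij_betw E {..<q ^ T} (PiE {..<T} (\<lambda>_. UNIV))"
    unfolding E_def q_def by (rule bij_betw_digit_vectors) (rule psi)
  then have E: "inj_on E {..<q ^ T}" "E ` {..<q ^ T} = PiE {..<T} (\<lambda>_. UNIV)"
    by (simp_all add: bij_betw_def)
  define S where "S = {y. y < q ^ T \<and> (\<forall>l\<in>J. (\<Sum>r<R. C l r * \<psi> r (digit q (c * q ^ T + y) r)) = f l)}"
  have "S = {y \<in> {..<q ^ T}. E y \<in> lin_solutions C J T (\<lambda>l. f l - h l)}"
    using split by (auto simp: S_def E_def lin_solutions_def eq_diff_eq)
  then have "E ` S = lin_solutions C J T (\<lambda>l. f l - h l)"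
    using E(2) by (auto simp: lin_solutions_def)
  moreover have "inj_on E S"
    using E(1) by (rule inj_on_subset) (auto simp: S_def)
  moreover have "card (lin_solutions C J T (\<lambda>l. f l - h l)) * q ^ card J = q ^ T"
    unfolding q_def T_def by (rule card_lin_solutions[OF finJ indep])
  ultimately have "card S * q ^ card J = q ^ T"
    by (metis card_image)
  then have "card S = q ^ t"
    using q2 by (simp add: T_def power_add)
  then show ?thesis
    by (simp add: S_def q_def T_def)
qed

lemma finite_down_closed_eq_lessThan:
  fixes S :: "nat set"
  assumes "finite S" and "\<And>x y. x \<in> S \<Longrightarrow> y \<le> x \<Longrightarrow> y \<in> S"
  shows "S = {..<card S}"
proof (cases "S = {}")
  case False
  define m where "m = Max S"
  have "S = {..m}"
  proof
    show "S \<subseteq> {..m}"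
      using assms(1) by (auto simp: m_def)
    show "{..m} \<subseteq> S"
      using assms(2) Max_in[OF assms(1) False] by (auto simp: m_def)
  qed
  then show ?thesis
    by auto
qed simp

lemma card_split_residues:
  fixes v N :: nat
  assumes v: "0 < v"
  shows "card {n. n < N \<and> P n} = (\<Sum>\<rho><v. card {w. w < card {w. v * w + \<rho> < N} \<and> P (v * w + \<rho>)})"
proof -
  have segment: "{w. v * w + \<rho> < N} = {..<card {w. v * w + \<rho> < N}}" for \<rho>
  proof (rule finite_down_closed_eq_lessThan)
    have "{w. v * w + \<rho> < N} \<subseteq> {..<N}"
    proof
      fix w
      assume "w \<in> {w. v * w + \<rho> < N}"
      moreover have "w \<le> v * w"
        using v by simp
      ultimately show "w \<in> {..<N}"
        unfolding mem_Collect_eq lessThan_iff by linarith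
    qed
    then show "finite {w. v * w + \<rho> < N}"
      by (rule finite_subset) simp
  next
    fix x y
    assume "x \<in> {w. v * w + \<rho> < N}" "y \<le> x"
    moreover have "v * y \<le> v * x"
      using \<open>y \<le> x\<close> by simp
    ultimately show "y \<in> {w. v * w + \<rho> < N}"
      unfolding mem_Collect_eq by linarith
  qed
  have in_segment: "w < card {w. v * w + \<rho> < N} \<longleftrightarrow> v * w + \<rho> < N" for w \<rho>
    using arg_cong[OF segment[of \<rho>], of "\<lambda>S. w \<in> S"] by simp
  have residue_class: "{n \<in> {n. n < N \<and> P n}. n mod v = \<rho>}
      = (\<lambda>w. v * w + \<rho>) ` {w. w < card {w. v * w + \<rho> < N} \<and> P (v * w + \<rho>)}" if "\<rho> < v" for \<rho>
  proof (intro set_eqI iffI)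
    fix n
    assume "n \<in> {n \<in> {n. n < N \<and> P n}. n mod v = \<rho>}"
    moreover have "n = v * (n div v) + n mod v"
      by simp
    ultimately show "n \<in> (\<lambda>w. v * w + \<rho>) ` {w. w < card {w. v * w + \<rho> < N} \<and> P (v * w + \<rho>)}"
      unfolding in_segment by (auto intro!: image_eqI[where x = "n div v"])
  qed (use that in \<open>auto simp: in_segment\<close>)
  have "card {n. n < N \<and> P n} = (\<Sum>\<rho><v. card {n \<in> {n. n < N \<and> P n}. n mod v = \<rho>})"
    using v by (intro card_eq_sum_card_fibres) auto
  also have "\<dots> = (\<Sum>\<rho><v. card {w. w < card {w. v * w + \<rho> < N} \<and> P (v * w + \<rho>)})"
  proof (rule sum.cong[OF refl])
    fix \<rho>
    assume "\<rho> \<in> {..<v}"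
    then show "card {n \<in> {n. n < N \<and> P n}. n mod v = \<rho>}
        = card {w. w < card {w. v * w + \<rho> < N} \<and> P (v * w + \<rho>)}"
      using v by (simp only: residue_class lessThan_iff) (intro card_image, auto simp: inj_on_def)
  qed
  finally show ?thesis .
qed

section \<open>From box errors to the star discrepancy\<close>

lemma reversed_digit_expansion_over_power:
  fixes d :: "nat \<Rightarrow> nat" and q L :: nat
  assumes "0 < q"
  shows "real (\<Sum>r<L. d (L - r) * q ^ r) / real q ^ L = (\<Sum>j<L. real (d (Suc j)) / real q ^ Suc j)"
proof -
  have "real (\<Sum>r<L. d (L - r) * q ^ r) / real q ^ L = (\<Sum>r<L. real (d (L - r)) * real q ^ r / real q ^ L)"
    by (simp add: sum_divide_distrib)
  also have "\<dots> = (\<Sum>j<L. real (d (L - (L - Suc j))) * real q ^ (L - Suc j) / real q ^ L)"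
    by (rule sum.nat_diff_reindex[symmetric])
  also have "\<dots> = (\<Sum>j<L. real (d (Suc j)) / real q ^ Suc j)"
  proof (rule sum.cong[OF refl])
    fix j
    assume "j \<in> {..<L}"
    then have "L - (L - Suc j) = Suc j" "L = (L - Suc j) + Suc j"
      by simp_all
    then have "real q ^ L = real q ^ (L - Suc j) * real q ^ Suc j"
      by (metis power_add)
    then show "real (d (L - (L - Suc j))) * real q ^ (L - Suc j) / real q ^ L = real (d (Suc j)) / real q ^ Suc j"
      using assms \<open>L - (L - Suc j) = Suc j\<close> by (simp add: field_simps)
  qed
  finally show ?thesis .
qed

text \<open>The series is dominated by \<open>\<Sum>j. (q - 1) / q ^ Suc j = 1\<close>.\<close>

lemma digit_series_tail:
  fixes d :: "nat \<Rightarrow> nat" and q L :: nat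
  assumes q: "2 \<le> q" and d: "\<And>j. d j < q"
  shows "summable (\<lambda>j. real (d j) / real q ^ Suc j)"
    and "(\<Sum>n. real (d (n + L)) / real q ^ Suc (n + L)) \<le> 1 / real q ^ L"
proof -
  define f where "f j = real (d j) / real q ^ Suc j" for j
  define g where "g j = ((real q - 1) / real q) * (1 / real q) ^ j" for j
  have qr: "2 \<le> real q"
    using q by simp
  have f_nonneg: "0 \<le> f j" for j
    by (simp add: f_def)
  have f_le_g: "f j \<le> g j" for j
  proof -
    have "real (d j) \<le> real q - 1"
      using d[of j] by (simp add: of_nat_diff)
    then have "f j \<le> (real q - 1) / real q ^ Suc j"
      unfolding f_def using qr by (intro divide_right_mono) auto
    also have "\<dots> = g j"
      unfolding g_def by (simp add: power_divide field_simps)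
    finally show ?thesis .
  qed
  have "g sums (((real q - 1) / real q) * (1 / (1 - 1 / real q)))"
    unfolding g_def by (intro sums_mult geometric_sums) (use qr in simp)
  moreover have "((real q - 1) / real q) * (1 / (1 - 1 / real q)) = 1"
    using qr by (simp add: field_simps)
  ultimately have g_sums: "g sums 1"
    by (simp only:)
  show summable_f: "summable (\<lambda>j. real (d j) / real q ^ Suc j)"
    using f_nonneg f_le_g by (intro summable_comparison_test'[OF sums_summable[OF g_sums], of 0])
      (simp_all add: f_def)
  have "(\<lambda>n. (1 / real q) ^ L * g n) sums ((1 / real q) ^ L * 1)"
    using g_sums by (intro sums_mult)
  moreover have "(1 / real q) ^ L * g n = g (n + L)" for n
    unfolding g_def by (simp add: power_add field_simps)
  ultimately have "(\<lambda>n. g (n + L)) sums (1 / real q ^ L)"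
    by (simp add: power_one_over)
  moreover have "(\<Sum>n. f (n + L)) \<le> (\<Sum>n. g (n + L))"
    using f_le_g summable_ignore_initial_segment[OF summable_f, of L]
      summable_ignore_initial_segment[OF sums_summable[OF g_sums], of L]
    by (intro suminf_le) (simp_all add: f_def)
  ultimately show "(\<Sum>n. real (d (n + L)) / real q ^ Suc (n + L)) \<le> 1 / real q ^ L"
    by (simp add: f_def sums_iff)
qed

lemma digit_series_bounds:
  fixes d :: "nat \<Rightarrow> nat" and q L :: nat
  assumes q: "2 \<le> q" and d: "\<And>j. d (Suc j) < q"
  shows "real (\<Sum>r<L. d (L - r) * q ^ r) / real q ^ L \<le> (\<Sum>j. real (d (Suc j)) / real q ^ Suc j)"
    and "(\<Sum>j. real (d (Suc j)) / real q ^ Suc j) \<le> (real (\<Sum>r<L. d (L - r) * q ^ r) + 1) / real q ^ L"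
proof -
  have summable: "summable (\<lambda>j. real (d (Suc j)) / real q ^ Suc j)"
    and tail: "(\<Sum>n. real (d (Suc (n + L))) / real q ^ Suc (n + L)) \<le> 1 / real q ^ L"
    using digit_series_tail(1)[where q = q and d = "\<lambda>j. d (Suc j)"]
      digit_series_tail(2)[where q = q and d = "\<lambda>j. d (Suc j)" and L = L] q d by simp_all
  have split: "(\<Sum>j. real (d (Suc j)) / real q ^ Suc j)
      = (\<Sum>n. real (d (Suc (n + L))) / real q ^ Suc (n + L)) + real (\<Sum>r<L. d (L - r) * q ^ r) / real q ^ L"
    using suminf_split_initial_segment[OF summable, of L] q
      reversed_digit_expansion_over_power[where q = q and d = d and L = L] by simp
  have "0 \<le> (\<Sum>n. real (d (Suc (n + L))) / real q ^ Suc (n + L))"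
    using summable_ignore_initial_segment[OF summable, of L] by (intro suminf_nonneg) simp_all
  with split tail show "real (\<Sum>r<L. d (L - r) * q ^ r) / real q ^ L \<le> (\<Sum>j. real (d (Suc j)) / real q ^ Suc j)"
    and "(\<Sum>j. real (d (Suc j)) / real q ^ Suc j) \<le> (real (\<Sum>r<L. d (L - r) * q ^ r) + 1) / real q ^ L"
    by (simp_all add: add_divide_distrib)
qed

lemma nat_ceiling_grid_approx:
  fixes b :: real and Q :: nat
  assumes b: "0 \<le> b" "b \<le> 1" and Q: "0 < Q"
  shows "b * Q \<le> real (nat \<lceil>b * Q\<rceil>)" and "real (nat \<lceil>b * Q\<rceil>) < b * Q + 1"
    and "nat \<lceil>b * Q\<rceil> \<le> Q"
    and "\<bar>real (nat \<lceil>b * Q\<rceil>) / Q - b\<bar> \<le> 1 / Q"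
    and "\<bar>real (nat \<lceil>b * Q\<rceil> - 1) / Q - b\<bar> \<le> 1 / Q"
proof -
  define U where "U = nat \<lceil>b * Q\<rceil>"
  have approx: "\<bar>y / Q - b\<bar> \<le> 1 / Q" if "\<bar>y - b * Q\<bar> \<le> 1" for y :: real
  proof -
    have "y / Q - b = (y - b * Q) / Q"
      using Q by (simp add: field_simps)
    then show ?thesis
      using that Q by (simp add: abs_divide divide_right_mono)
  qed
  have bQ: "0 \<le> b * Q" "b * Q \<le> Q"
    using b Q by (simp_all add: mult_le_cancel_right1)
  then have "real U = of_int \<lceil>b * Q\<rceil>"
    by (simp add: U_def)
  then show U: "b * Q \<le> real (nat \<lceil>b * Q\<rceil>)" "real (nat \<lceil>b * Q\<rceil>) < b * Q + 1"
    unfolding U_def[symmetric] by linarith+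
  show "nat \<lceil>b * Q\<rceil> \<le> Q"
    using bQ(2) by (simp add: ceiling_le_iff)
  show "\<bar>real (nat \<lceil>b * Q\<rceil>) / Q - b\<bar> \<le> 1 / Q"
    using U unfolding U_def[symmetric] by (intro approx) (simp add: abs_le_iff)
  have "real (U - 1) = (if U = 0 then 0 else real U - 1)"
    by (simp add: of_nat_diff)
  then have "b * Q - 1 \<le> real (U - 1)" "real (U - 1) \<le> b * Q"
    using U[folded U_def] bQ by (auto split: if_splits)
  then show "\<bar>real (nat \<lceil>b * Q\<rceil> - 1) / Q - b\<bar> \<le> 1 / Q"
    unfolding U_def[symmetric] by (intro approx) (simp add: abs_le_iff)
qed

lemma prod_grid_approx:
  fixes W :: "nat \<Rightarrow> nat" and b :: "nat \<Rightarrow> real" and Q :: nat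
  assumes "\<And>i. i \<in> A \<Longrightarrow> \<bar>real (W i) / Q - b i\<bar> \<le> 1 / Q"
    and "\<And>i. i \<in> A \<Longrightarrow> W i \<le> Q" and "\<And>i. i \<in> A \<Longrightarrow> 0 \<le> b i \<and> b i \<le> 1"
  shows "\<bar>(\<Prod>i\<in>A. real (W i) / Q) - (\<Prod>i\<in>A. b i)\<bar> \<le> real (card A) / Q"
proof -
  have "norm ((\<Prod>i\<in>A. real (W i) / Q) - (\<Prod>i\<in>A. b i)) \<le> (\<Sum>i\<in>A. norm (real (W i) / Q - b i))"
    using assms(2,3) by (intro norm_prod_diff) (auto simp: divide_le_eq_1)
  also have "\<dots> \<le> (\<Sum>i\<in>A. 1 / Q)"
    using assms(1) by (intro sum_mono) simp
  finally show ?thesis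
    by simp
qed

lemma sandwich_bound:
  fixes cA cX cB N p pA pB E D :: real
  assumes "cA \<le> cX" "cX \<le> cB" "\<bar>cA - N * pA\<bar> \<le> E" "\<bar>cB - N * pB\<bar> \<le> E"
    and "N * \<bar>pA - p\<bar> \<le> D" "N * \<bar>pB - p\<bar> \<le> D" "0 < N"
  shows "\<bar>cX / N - p\<bar> \<le> (E + D) / N"
proof -
  have "N * pB - N * p \<le> D"
    using mult_left_mono[OF abs_ge_self[of "pB - p"], of N] assms(6,7) by (simp add: right_diff_distrib)
  moreover have "N * p - N * pA \<le> D"
    using mult_left_mono[OF abs_ge_minus_self[of "pA - p"], of N] assms(5,7) by (simp add: right_diff_distrib)
  ultimately have "\<bar>cX - N * p\<bar> \<le> E + D"
    using assms(1-4) unfolding abs_le_iff by linarith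
  moreover have "cX / N - p = (cX - N * p) / N"
    using assms(7) by (simp add: field_simps)
  ultimately show ?thesis
    using assms(7) by (simp add: abs_divide divide_right_mono)
qed

lemma card_box_points_grid_sandwich:
  fixes x :: "nat \<Rightarrow> nat \<Rightarrow> real" and Y :: "nat \<Rightarrow> nat \<Rightarrow> nat" and b :: "nat \<Rightarrow> real" and Q :: nat
  assumes Q: "0 < Q"
    and Y: "\<And>n i. i \<in> {1..s} \<Longrightarrow> real (Y i n) / Q \<le> x n i \<and> x n i \<le> (real (Y i n) + 1) / Q"
    and b: "\<forall>i\<in>{1..s}. 0 \<le> b i \<and> b i \<le> 1"
  shows "card (box_points s N Y (\<lambda>i. {..<nat \<lceil>b i * Q\<rceil> - 1})) \<le> card {n. n < N \<and> (\<forall>i\<in>{1..s}. x n i < b i)}"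
    and "card {n. n < N \<and> (\<forall>i\<in>{1..s}. x n i < b i)} \<le> card (box_points s N Y (\<lambda>i. {..<nat \<lceil>b i * Q\<rceil>}))"
proof -
  have ceiling: "b i * Q \<le> real (nat \<lceil>b i * Q\<rceil>)" "real (nat \<lceil>b i * Q\<rceil>) < b i * Q + 1"
    if "i \<in> {1..s}" for i
    using nat_ceiling_grid_approx[of "b i" Q] b that Q by auto
  have "box_points s N Y (\<lambda>i. {..<nat \<lceil>b i * Q\<rceil> - 1}) \<subseteq> {n. n < N \<and> (\<forall>i\<in>{1..s}. x n i < b i)}"
  proof (intro subsetI CollectI conjI ballI)
    fix n i
    assume n: "n \<in> box_points s N Y (\<lambda>i. {..<nat \<lceil>b i * Q\<rceil> - 1})" and i: "i \<in> {1..s}"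
    then have "Y i n < nat \<lceil>b i * Q\<rceil> - 1"
      by (auto simp: box_points_def)
    then have "real (Y i n) + 1 < b i * Q"
      using ceiling(2)[OF i] by linarith
    then have "(real (Y i n) + 1) / Q < b i"
      using Q by (simp add: pos_divide_less_eq)
    then show "x n i < b i"
      using Y[OF i, of n] by linarith
  qed (simp add: box_points_def)
  then show "card (box_points s N Y (\<lambda>i. {..<nat \<lceil>b i * Q\<rceil> - 1})) \<le> card {n. n < N \<and> (\<forall>i\<in>{1..s}. x n i < b i)}"
    by (intro card_mono) simp_all
  have "{n. n < N \<and> (\<forall>i\<in>{1..s}. x n i < b i)} \<subseteq> box_points s N Y (\<lambda>i. {..<nat \<lceil>b i * Q\<rceil>})"
  proof (unfold box_points_def, intro subsetI CollectI conjI ballI)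
    fix n i
    assume n: "n \<in> {n. n < N \<and> (\<forall>i\<in>{1..s}. x n i < b i)}" and i: "i \<in> {1..s}"
    then have "x n i < b i"
      by blast
    then have "real (Y i n) / Q < b i"
      using Y[OF i, of n] by linarith
    then have "real (Y i n) < b i * Q"
      using Q by (simp add: pos_divide_less_eq)
    then have "real (Y i n) < real (nat \<lceil>b i * Q\<rceil>)"
      using ceiling(1)[OF i] by linarith
    then show "Y i n \<in> {..<nat \<lceil>b i * Q\<rceil>}"
      by simp
  qed simp
  then show "card {n. n < N \<and> (\<forall>i\<in>{1..s}. x n i < b i)} \<le> card (box_points s N Y (\<lambda>i. {..<nat \<lceil>b i * Q\<rceil>}))"
    by (intro card_mono) (simp_all add: box_points_def)
qed

lemma local_discrepancy_le_box_error:
  fixes x :: "nat \<Rightarrow> nat \<Rightarrow> real" and Y :: "nat \<Rightarrow> nat \<Rightarrow> nat" and b :: "nat \<Rightarrow> real" and E :: real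
  assumes q: "2 \<le> q" and N: "0 < N" "N \<le> q ^ L"
    and Y: "\<And>n i. i \<in> {1..s} \<Longrightarrow> real (Y i n) / real q ^ L \<le> x n i \<and> x n i \<le> (real (Y i n) + 1) / real q ^ L"
    and box: "\<And>U. \<forall>i\<in>{1..s}. U i \<le> q ^ L \<Longrightarrow> \<bar>box_error s (q ^ L) N Y (\<lambda>i. {..<U i})\<bar> \<le> E"
    and b: "\<forall>i\<in>{1..s}. 0 \<le> b i \<and> b i \<le> 1"
  shows "\<bar>real (card {n. n < N \<and> (\<forall>i\<in>{1..s}. x n i < b i)}) / real N - (\<Prod>i=1..s. b i)\<bar>
           \<le> (E + real s) / real N"
proof -
  define Q where "Q = q ^ L"
  define U where "U i = nat \<lceil>b i * Q\<rceil>" for i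
  define V where "V i = U i - 1" for i
  have Q: "0 < Q"
    using q by (simp add: Q_def)
  have U: "U i \<le> Q" "\<bar>real (U i) / Q - b i\<bar> \<le> 1 / Q" "\<bar>real (V i) / Q - b i\<bar> \<le> 1 / Q"
    if "i \<in> {1..s}" for i
    using nat_ceiling_grid_approx[of "b i" Q] b that Q by (auto simp: U_def V_def)
  have V: "V i \<le> Q" if "i \<in> {1..s}" for i
    using U(1)[OF that] by (simp add: V_def)
  have counts: "real (card (box_points s N Y (\<lambda>i. {..<V i}))) \<le> real (card {n. n < N \<and> (\<forall>i\<in>{1..s}. x n i < b i)})"
    "real (card {n. n < N \<and> (\<forall>i\<in>{1..s}. x n i < b i)}) \<le> real (card (box_points s N Y (\<lambda>i. {..<U i})))"
    using card_box_points_grid_sandwich[of Q s Y x b N] Y Q b by (simp_all add: U_def V_def Q_def)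
  have error: "\<bar>real (card (box_points s N Y (\<lambda>i. {..<W i}))) - real N * (\<Prod>i=1..s. real (W i) / Q)\<bar> \<le> E"
    if "\<And>i. i \<in> {1..s} \<Longrightarrow> W i \<le> Q" for W
    using box[of W] that by (simp add: box_error_def Q_def)
  have volume: "real N * \<bar>(\<Prod>i=1..s. real (W i) / Q) - (\<Prod>i=1..s. b i)\<bar> \<le> real s"
    if "\<And>i. i \<in> {1..s} \<Longrightarrow> W i \<le> Q \<and> \<bar>real (W i) / Q - b i\<bar> \<le> 1 / Q" for W
  proof -
    have "real N * \<bar>(\<Prod>i=1..s. real (W i) / Q) - (\<Prod>i=1..s. b i)\<bar> \<le> real N * (real s / Q)"
      using prod_grid_approx[of "{1..s}" W Q b] that b by (intro mult_left_mono) auto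
    also have "\<dots> \<le> real Q * (real s / Q)"
      using N(2) unfolding Q_def by (intro mult_right_mono) (simp_all only: of_nat_le_iff, simp)
    also have "\<dots> = real s"
      using Q by simp
    finally show ?thesis .
  qed
  show ?thesis
    using counts error[of U] error[of V] volume[of U] volume[of V] U V N(1)
    by (intro sandwich_bound[where pA = "\<Prod>i=1..s. real (V i) / Q" and pB = "\<Prod>i=1..s. real (U i) / Q", OF counts])
       simp_all
qed

lemma star_discrepancy_le_box_error:
  fixes x :: "nat \<Rightarrow> nat \<Rightarrow> real" and Y :: "nat \<Rightarrow> nat \<Rightarrow> nat" and E :: real
  assumes q: "2 \<le> q" and N: "0 < N" "N \<le> q ^ L"
    and Y: "\<And>n i. i \<in> {1..s} \<Longrightarrow> real (Y i n) / real q ^ L \<le> x n i \<and> x n i \<le> (real (Y i n) + 1) / real q ^ L"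
    and box: "\<And>U. \<forall>i\<in>{1..s}. U i \<le> q ^ L \<Longrightarrow> \<bar>box_error s (q ^ L) N Y (\<lambda>i. {..<U i})\<bar> \<le> E"
  shows "real N * star_discrepancy s x N \<le> E + real s"
proof -
  have "star_discrepancy s x N \<le> (E + real s) / real N"
    unfolding star_discrepancy_def
  proof (rule cSUP_least)
    show "{b::nat \<Rightarrow> real. \<forall>i\<in>{1..s}. 0 \<le> b i \<and> b i \<le> 1} \<noteq> {}"
      by (auto intro: exI[of _ "\<lambda>_. 0"])
  qed (use local_discrepancy_le_box_error[OF assms] in blast)
  then show ?thesis
    using N by (simp add: field_simps)
qed

lemma log_ceiling_bounds:
  fixes q N :: nat
  assumes q: "2 \<le> q" and N: "2 \<le> N"
  shows "N \<le> q ^ nat \<lceil>log q N\<rceil>"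
    and "real (nat \<lceil>log q N\<rceil>) + 1 \<le> (1 / ln q + 2 / ln 2) * ln N"
proof -
  define l where "l = log q N"
  define L where "L = nat \<lceil>l\<rceil>"
  have qr: "1 < real q"
    using q by simp
  have "0 \<le> l"
    unfolding l_def using qr N by simp
  then have L: "l \<le> real L" "real L < l + 1"
    unfolding L_def by linarith+
  have "real N = real q powr l"
    unfolding l_def using qr N by simp
  also have "\<dots> \<le> real q powr real L"
    using L(1) qr by (intro powr_mono) auto
  also have "\<dots> = real (q ^ L)"
    using qr by (simp add: powr_realpow)
  finally show "N \<le> q ^ nat \<lceil>log q N\<rceil>"
    unfolding L_def l_def by (simp only: of_nat_le_iff)
  have "2 \<le> 2 / ln 2 * ln N"
    using N ln_le_cancel_iff[of 2 "real N"] by (simp add: field_simps)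
  moreover have "l = ln N / ln q"
    by (simp add: l_def log_def)
  ultimately have "real L + 1 \<le> ln N / ln q + 2 / ln 2 * ln N"
    using L(2) by linarith
  then show "real (nat \<lceil>log q N\<rceil>) + 1 \<le> (1 / ln q + 2 / ln 2) * ln N"
    unfolding L_def l_def by (simp add: field_simps)
qed

lemma log_power_bound:
  fixes f :: "nat \<Rightarrow> real" and A B :: real and q s :: nat
  assumes q: "2 \<le> q" and A: "0 \<le> A" and B: "0 \<le> B"
    and bound: "\<And>N L. 2 \<le> N \<Longrightarrow> N \<le> q ^ L \<Longrightarrow> f N \<le> A * (real L + 1) ^ s + B"
  shows "\<exists>K. \<forall>N\<ge>2. f N \<le> K * ln (real N) ^ s"
proof (intro exI allI impI)
  fix N :: nat
  assume N: "2 \<le> N"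
  define c where "c = 1 / ln (real q) + 2 / ln 2"
  define L where "L = nat \<lceil>log q N\<rceil>"
  have ln2: "0 < ln (2::real)" "ln 2 \<le> ln (real N)"
    using N by simp_all
  have "f N \<le> A * (real L + 1) ^ s + B"
    using bound[OF N] log_ceiling_bounds(1)[OF q N] by (simp add: L_def)
  also have "\<dots> \<le> A * (c * ln N) ^ s + B"
    using log_ceiling_bounds(2)[OF q N] A by (intro add_right_mono mult_left_mono power_mono) (simp_all add: L_def c_def)
  also have "B \<le> B / ln 2 ^ s * ln N ^ s"
    using ln2 B power_mono[OF ln2(2), of s] by (simp add: field_simps mult_left_mono)
  finally show "f N \<le> (A * c ^ s + B / ln 2 ^ s) * ln (real N) ^ s"
    by (simp add: algebra_simps power_mult_distrib)
qed

section \<open>Algorithm 2 with affine input\<close>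

definition alg2_digit ::
    "(nat \<Rightarrow> nat \<Rightarrow> nat \<Rightarrow> 'f::{field,finite}) \<Rightarrow> (nat \<Rightarrow> nat \<Rightarrow> 'f) \<Rightarrow> (nat \<Rightarrow> nat \<Rightarrow> 'f \<Rightarrow> nat)
     \<Rightarrow> (nat \<Rightarrow> nat) \<Rightarrow> nat \<Rightarrow> nat \<Rightarrow> nat" where
  "alg2_digit C \<psi> lam a i j = lam i j (\<Sum>r\<in>{r. C i j r \<noteq> 0}. C i j r * \<psi> r (a r))"

lemma alg2_coord_eq_digit_series:
  fixes C :: "nat \<Rightarrow> nat \<Rightarrow> nat \<Rightarrow> 'f::{field,finite}"
  shows "alg2_coord C \<psi> lam a i = (\<Sum>j. real (alg2_digit C \<psi> lam a i (Suc j)) / real CARD('f) ^ Suc j)"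
  by (simp add: alg2_coord_def alg2_digit_def)

locale alg2_affine_input =
  fixes s t v :: nat
    and C :: "nat \<Rightarrow> nat \<Rightarrow> nat \<Rightarrow> 'f::{field,finite}"
    and \<psi> :: "nat \<Rightarrow> nat \<Rightarrow> 'f"
    and lam :: "nat \<Rightarrow> nat \<Rightarrow> 'f \<Rightarrow> nat"
    and \<alpha> :: "nat \<Rightarrow> nat"
    and sd :: "nat \<Rightarrow> nat \<Rightarrow> nat"
  assumes finite_row: "\<forall>i\<in>{1..s}. \<forall>j\<ge>1. finite {r. C i j r \<noteq> 0}"
    and lin_indep: "\<forall>m>t. \<forall>d::nat\<Rightarrow>nat.
          1 \<le> (\<Sum>i=1..s. d i) \<and> (\<Sum>i=1..s. d i) \<le> m - t \<longrightarrow>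
          (\<forall>e::nat\<Rightarrow>nat\<Rightarrow>'f.
             (\<forall>r<m. (\<Sum>i=1..s. \<Sum>j=1..d i. e i j * C i j r) = 0) \<longrightarrow>
             (\<forall>i\<in>{1..s}. \<forall>j\<in>{1..d i}. e i j = 0))"
    and psi_bij: "\<forall>r. bij_betw (\<psi> r) {..<CARD('f)} (UNIV :: 'f set)"
    and lambda_bij: "\<forall>i\<in>{1..s}. \<forall>j\<ge>1. bij_betw (lam i j) (UNIV :: 'f set) {..<CARD('f)}"
    and v_pos: "1 \<le> v"
    and v_coprime: "coprime v CARD('f)"
    and sd_def: "\<forall>n. is_qadic_seq_term CARD('f) v \<alpha> n (sd n)"
begin

definition point :: "nat \<Rightarrow> nat \<Rightarrow> real" where
  "point n i = alg2_coord C \<psi> lam (sd n) i"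

text \<open>The first \<open>L\<close> digits of \<open>point n i\<close>, read as an integer below \<open>CARD('f) ^ L\<close>.\<close>

definition grid_point :: "nat \<Rightarrow> nat \<Rightarrow> nat \<Rightarrow> nat" where
  "grid_point L i n = (\<Sum>r<L. alg2_digit C \<psi> lam (sd n) i (L - r) * CARD('f) ^ r)"

lemma alg2_digit_less:
  assumes "i \<in> {1..s}" "1 \<le> j"
  shows "alg2_digit C \<psi> lam a i j < CARD('f)"
  using lambda_bij assms unfolding alg2_digit_def by (meson bij_betwE lessThan_iff UNIV_I)

lemma rows_independent:
  fixes k :: "nat \<Rightarrow> nat" and e :: "nat \<times> nat \<Rightarrow> 'f"
  defines "J \<equiv> Sigma {1..s} (\<lambda>i. {1..k i})"
  assumes e: "\<forall>r<card J + t. (\<Sum>l\<in>J. e l * C (fst l) (snd l) r) = 0"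
  shows "\<forall>l\<in>J. e l = 0"
proof (cases "card J = 0")
  case True
  then show ?thesis
    by (simp add: J_def)
next
  case False
  have card_J: "card J = (\<Sum>i=1..s. k i)"
    by (simp add: J_def)
  have "(\<Sum>i=1..s. \<Sum>j=1..k i. e (i, j) * C i j r) = (\<Sum>l\<in>J. e l * C (fst l) (snd l) r)" for r
    unfolding J_def by (subst sum.Sigma) (auto intro!: sum.cong simp: split_beta)
  then have "\<forall>r<card J + t. (\<Sum>i=1..s. \<Sum>j=1..k i. e (i, j) * C i j r) = 0"
    using e by simp
  moreover have "t < card J + t"
    using False by simp
  moreover have "1 \<le> (\<Sum>i=1..s. k i) \<and> (\<Sum>i=1..s. k i) \<le> card J + t - t"
    using False card_J by linarith
  ultimately have "\<forall>i\<in>{1..s}. \<forall>j\<in>{1..k i}. e (i, j) = 0"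
    using lin_indep[rule_format, of "card J + t" k "\<lambda>i j. e (i, j)"] by blast
  then show ?thesis
    by (auto simp: J_def)
qed

text \<open>Since the maps \<open>\<lambda> i j\<close> are bijective, prescribing the digits \<open>j \<le> k i\<close> of all coordinates
  amounts to prescribing the values of the corresponding rows of the matrices on the vector
  \<open>(\<psi> r (a r))\<^sub>r\<close>; the rows have finite support, so only the first \<open>R\<close> entries matter.\<close>

lemma digit_pattern_as_linear_system:
  fixes k :: "nat \<Rightarrow> nat" and \<pi> :: "nat \<Rightarrow> nat \<Rightarrow> nat"
  defines "J \<equiv> Sigma {1..s} (\<lambda>i. {1..k i})"
  assumes \<pi>: "\<forall>i\<in>{1..s}. \<forall>j\<in>{1..k i}. \<pi> i j < CARD('f)"
  obtains R f where "card J + t \<le> R"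
    and "\<And>a. (\<forall>i\<in>{1..s}. \<forall>j\<in>{1..k i}. alg2_digit C \<psi> lam a i j = \<pi> i j) \<longleftrightarrow>
           (\<forall>l\<in>J. (\<Sum>r<R. C (fst l) (snd l) r * \<psi> r (a r)) = f l)"
proof -
  have "finite (\<Union>l\<in>J. {r. C (fst l) (snd l) r \<noteq> 0})"
    using finite_row by (auto simp: J_def)
  then obtain R0 where R0: "(\<Union>l\<in>J. {r. C (fst l) (snd l) r \<noteq> 0}) \<subseteq> {..<R0}"
    using finite_nat_bounded by blast
  define R where "R = max R0 (card J + t)"
  define f where "f l = inv_into UNIV (lam (fst l) (snd l)) (\<pi> (fst l) (snd l))" for l
  have lam_iff: "lam (fst l) (snd l) x = \<pi> (fst l) (snd l) \<longleftrightarrow> x = f l" if l: "l \<in> J" for l x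
  proof -
    have bij: "bij_betw (lam (fst l) (snd l)) UNIV {..<CARD('f)}"
      using lambda_bij l by (auto simp: J_def)
    moreover have "\<pi> (fst l) (snd l) \<in> {..<CARD('f)}"
      using \<pi> l by (auto simp: J_def)
    ultimately have in_range: "\<pi> (fst l) (snd l) \<in> range (lam (fst l) (snd l))"
      by (simp add: bij_betw_def)
    show ?thesis
    proof
      assume "lam (fst l) (snd l) x = \<pi> (fst l) (snd l)"
      then show "x = f l"
        unfolding f_def using bij by (metis bij_betw_def inv_into_f_f UNIV_I)
    next
      assume "x = f l"
      then show "lam (fst l) (snd l) x = \<pi> (fst l) (snd l)"
        unfolding f_def using in_range by (simp add: f_inv_into_f)
    qed
  qed
  have support: "(\<Sum>r\<in>{r. C (fst l) (snd l) r \<noteq> 0}. C (fst l) (snd l) r * \<psi> r (a r))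
      = (\<Sum>r<R. C (fst l) (snd l) r * \<psi> r (a r))" if l: "l \<in> J" for l a
    using R0 l by (intro sum.mono_neutral_left) (auto simp: R_def)
  show ?thesis
  proof (rule that)
    show "card J + t \<le> R"
      by (simp add: R_def)
    fix a
    have "(\<forall>i\<in>{1..s}. \<forall>j\<in>{1..k i}. alg2_digit C \<psi> lam a i j = \<pi> i j) \<longleftrightarrow>
        (\<forall>l\<in>J. lam (fst l) (snd l) (\<Sum>r\<in>{r. C (fst l) (snd l) r \<noteq> 0}. C (fst l) (snd l) r * \<psi> r (a r))
          = \<pi> (fst l) (snd l))"
      by (auto simp: J_def alg2_digit_def)
    also have "\<dots> \<longleftrightarrow> (\<forall>l\<in>J. (\<Sum>r<R. C (fst l) (snd l) r * \<psi> r (a r)) = f l)"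
      using lam_iff support by auto
    finally show "(\<forall>i\<in>{1..s}. \<forall>j\<in>{1..k i}. alg2_digit C \<psi> lam a i j = \<pi> i j) \<longleftrightarrow>
        (\<forall>l\<in>J. (\<Sum>r<R. C (fst l) (snd l) r * \<psi> r (a r)) = f l)" .
  qed
qed

lemma digit_pattern_count:
  fixes k :: "nat \<Rightarrow> nat" and \<pi> :: "nat \<Rightarrow> nat \<Rightarrow> nat"
  assumes \<pi>: "\<forall>i\<in>{1..s}. \<forall>j\<in>{1..k i}. \<pi> i j < CARD('f)"
  shows "\<bar>real (card {n. n < N \<and> (\<forall>i\<in>{1..s}. \<forall>j\<in>{1..k i}. alg2_digit C \<psi> lam (sd n) i j = \<pi> i j)})
          - real N / real CARD('f) ^ (\<Sum>i=1..s. k i)\<bar> \<le> 2 * real v * real CARD('f) ^ t"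
proof -
  define J where "J = Sigma {1..s} (\<lambda>i. {1..k i})"
  define K where "K = (\<Sum>i=1..s. k i)"
  have q2: "2 \<le> CARD('f)"
    by (rule two_le_card_field)
  have card_J: "card J = K"
    by (simp add: J_def K_def)
  obtain R f where R: "card J + t \<le> R"
    and pattern_iff: "\<And>a. (\<forall>i\<in>{1..s}. \<forall>j\<in>{1..k i}. alg2_digit C \<psi> lam a i j = \<pi> i j) \<longleftrightarrow>
       (\<forall>l\<in>J. (\<Sum>r<R. C (fst l) (snd l) r * \<psi> r (a r)) = f l)"
    using digit_pattern_as_linear_system[OF \<pi>] unfolding J_def by blast
  define \<Phi> where "\<Phi> z = (\<forall>l\<in>J. (\<Sum>r<R. C (fst l) (snd l) r * \<psi> r (digit CARD('f) z r)) = f l)" for z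
  define P where "P n = (\<forall>i\<in>{1..s}. \<forall>j\<in>{1..k i}. alg2_digit C \<psi> lam (sd n) i j = \<pi> i j)" for n
  define z where "z \<rho> = (\<Sum>r<R. sd \<rho> r * CARD('f) ^ r)" for \<rho>
  define W where "W \<rho> = card {w. v * w + \<rho> < N}" for \<rho>
  have blocks: "card {y. y < CARD('f) ^ (K + t) \<and> \<Phi> (c * CARD('f) ^ (K + t) + y)} = CARD('f) ^ t" for c
    unfolding \<Phi>_def card_J[symmetric]
    by (rule card_block_solutions[where C = "\<lambda>l r. C (fst l) (snd l) r", OF _ _ _ R])
       (use psi_bij rows_independent in \<open>auto simp: J_def\<close>)
  have P_shift: "P (v * w + \<rho>) \<longleftrightarrow> \<Phi> (z \<rho> + w)" for w \<rho>
  proof -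
    have "sd (v * w + \<rho>) r = digit CARD('f) (z \<rho> + w) r" if "r < R" for r
      unfolding z_def using q2 v_coprime sd_def that by (intro qadic_seq_term_digit) auto
    then show ?thesis
      unfolding P_def pattern_iff \<Phi>_def by simp
  qed
  have count: "card {n. n < N \<and> P n} = (\<Sum>\<rho><v. card {w. w < W \<rho> \<and> \<Phi> (z \<rho> + w)})"
    using card_split_residues[of v N P] v_pos by (simp add: P_shift W_def)
  have total: "N = (\<Sum>\<rho><v. W \<rho>)"
    using card_split_residues[of v N "\<lambda>_. True"] v_pos by (simp add: W_def)
  have "real (card {n. n < N \<and> P n}) - real N / real CARD('f) ^ K
      = (\<Sum>\<rho><v. real (card {w. w < W \<rho> \<and> \<Phi> (z \<rho> + w)}) - real (W \<rho>) / real CARD('f) ^ K)"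
    unfolding count by (subst total) (simp add: sum_subtractf sum_divide_distrib)
  also have "\<bar>\<dots>\<bar> \<le> (\<Sum>\<rho><v. \<bar>real (card {w. w < W \<rho> \<and> \<Phi> (z \<rho> + w)}) - real (W \<rho>) / real CARD('f) ^ K\<bar>)"
    by (rule sum_abs)
  also have "\<dots> \<le> (\<Sum>\<rho><v. 2 * real CARD('f) ^ t)"
  proof (rule sum_mono)
    fix \<rho>
    have "real (W \<rho>) * real (CARD('f) ^ t) / real (CARD('f) ^ (K + t)) = real (W \<rho>) / real CARD('f) ^ K"
      using q2 by (simp add: power_add)
    then show "\<bar>real (card {w. w < W \<rho> \<and> \<Phi> (z \<rho> + w)}) - real (W \<rho>) / real CARD('f) ^ K\<bar> \<le> 2 * real CARD('f) ^ t"
      using card_interval_if_blocks[OF blocks, of "W \<rho>" "z \<rho>"] q2 by simp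
  qed
  finally show ?thesis
    by (simp add: P_def K_def)
qed

lemma elementary_box_error:
  assumes S: "\<forall>i\<in>{1..s}. elementary_interval CARD('f) L (S i)"
  shows "\<bar>box_error s (CARD('f) ^ L) N (grid_point L) S\<bar> \<le> 2 * real v * real CARD('f) ^ t"
proof -
  have q2: "2 \<le> CARD('f)"
    by (rule two_le_card_field)
  obtain e a where ea: "\<forall>i\<in>{1..s}. e i \<le> L \<and> a i < CARD('f) ^ (L - e i) \<and> S i = {a i * CARD('f) ^ e i ..< (a i + 1) * CARD('f) ^ e i}"
    using S bchoice[of "{1..s}" "\<lambda>i p. fst p \<le> L \<and> snd p < CARD('f) ^ (L - fst p)
        \<and> S i = {snd p * CARD('f) ^ fst p ..< (snd p + 1) * CARD('f) ^ fst p}"]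
    unfolding elementary_interval_def by (metis fst_conv snd_conv)
  define k where "k i = L - e i" for i
  define \<pi> where "\<pi> i j = digit CARD('f) (a i) (k i - j)" for i j
  have "grid_point L i n \<in> S i \<longleftrightarrow> (\<forall>j\<in>{1..k i}. alg2_digit C \<psi> lam (sd n) i j = \<pi> i j)"
    if i: "i \<in> {1..s}" for i n
    using ea i digit_expansion_mem_cell_iff[OF q2 alg2_digit_less[OF i, where a = "sd n"], where e = "e i" and a = "a i" and L = L]
    unfolding grid_point_def k_def \<pi>_def by simp
  then have "{n. n < N \<and> (\<forall>i\<in>{1..s}. grid_point L i n \<in> S i)}
      = {n. n < N \<and> (\<forall>i\<in>{1..s}. \<forall>j\<in>{1..k i}. alg2_digit C \<psi> lam (sd n) i j = \<pi> i j)}"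
    by auto
  moreover have "(\<Prod>i=1..s. real (card (S i)) / real (CARD('f) ^ L)) = 1 / real CARD('f) ^ (\<Sum>i=1..s. k i)"
  proof -
    have "real (card (S i)) / real (CARD('f) ^ L) = 1 / real CARD('f) ^ k i" if "i \<in> {1..s}" for i
    proof -
      have "CARD('f) ^ L = CARD('f) ^ e i * CARD('f) ^ k i"
        using ea that by (simp add: k_def flip: power_add)
      then show ?thesis
        using ea that q2 by (simp add: algebra_simps)
    qed
    then show ?thesis
      by (simp add: prod_dividef power_sum)
  qed
  moreover have "\<forall>i\<in>{1..s}. \<forall>j\<in>{1..k i}. \<pi> i j < CARD('f)"
    using q2 by (simp add: \<pi>_def)
  ultimately show ?thesis
    using digit_pattern_count[of k \<pi> N] by (simp add: box_error_def box_points_def)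
qed

lemma star_discrepancy_le:
  assumes N: "0 < N" "N \<le> CARD('f) ^ L"
  shows "real N * star_discrepancy s point N \<le> 2 * real v * real CARD('f) ^ t * real ((L + 1) * CARD('f)) ^ s + real s"
proof (rule star_discrepancy_le_box_error[OF two_le_card_field[where 'f='f] N])
  fix n i
  assume i: "i \<in> {1..s}"
  show "real (grid_point L i n) / real CARD('f) ^ L \<le> point n i \<and> point n i \<le> (real (grid_point L i n) + 1) / real CARD('f) ^ L"
    using digit_series_bounds[OF two_le_card_field[where 'f='f], of "alg2_digit C \<psi> lam (sd n) i" L] alg2_digit_less[OF i]
    by (simp add: point_def grid_point_def alg2_coord_eq_digit_series)
next
  fix U
  assume "\<forall>i\<in>{1..s}. U i \<le> CARD('f) ^ L"
  then show "\<bar>box_error s (CARD('f) ^ L) N (grid_point L) (\<lambda>i. {..<U i})\<bar> \<le> 2 * real v * real CARD('f) ^ t * real ((L + 1) * CARD('f)) ^ s"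
    by (intro box_error_initial_segments[OF two_le_card_field[where 'f='f]] elementary_box_error) simp_all
qed

theorem star_discrepancy_log_bound: "\<exists>K. \<forall>N\<ge>2. real N * star_discrepancy s point N \<le> K * ln (real N) ^ s"
proof (rule log_power_bound[OF two_le_card_field[where 'f='f]])
  fix N L :: nat
  assume "2 \<le> N" "N \<le> CARD('f) ^ L"
  then have "real N * star_discrepancy s point N \<le> 2 * real v * real CARD('f) ^ t * real ((L + 1) * CARD('f)) ^ s + real s"
    by (intro star_discrepancy_le) simp_all
  moreover have "real ((L + 1) * CARD('f)) ^ s = real CARD('f) ^ s * (real L + 1) ^ s"
    unfolding of_nat_mult power_mult_distrib by (simp add: add.commute)
  ultimately show "real N * star_discrepancy s point N \<le> 2 * real v * real CARD('f) ^ t * real CARD('f) ^ s * (real L + 1) ^ s + real s"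
    by (simp add: mult_ac)
qed simp_all

end

theorem corollary3:
  fixes s t v :: nat
    and C :: "nat \<Rightarrow> nat \<Rightarrow> nat \<Rightarrow> 'f::{field,finite}"
    and \<psi> :: "nat \<Rightarrow> nat \<Rightarrow> 'f"
    and lam :: "nat \<Rightarrow> nat \<Rightarrow> 'f \<Rightarrow> nat"
    and \<alpha> :: "nat \<Rightarrow> nat"
    and sd :: "nat \<Rightarrow> nat \<Rightarrow> nat"
  assumes s_pos: "1 \<le> s"
    and finite_row: "\<forall>i\<in>{1..s}. \<forall>j\<ge>1. finite {r. C i j r \<noteq> 0}"
    and lin_indep: "\<forall>m>t. \<forall>d::nat\<Rightarrow>nat.
          1 \<le> (\<Sum>i=1..s. d i) \<and> (\<Sum>i=1..s. d i) \<le> m - t \<longrightarrow>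
          (\<forall>e::nat\<Rightarrow>nat\<Rightarrow>'f.
             (\<forall>r<m. (\<Sum>i=1..s. \<Sum>j=1..d i. e i j * C i j r) = 0) \<longrightarrow>
             (\<forall>i\<in>{1..s}. \<forall>j\<in>{1..d i}. e i j = 0))"
    and psi_bij: "\<forall>r. bij_betw (\<psi> r) {..<CARD('f)} (UNIV :: 'f set)"
    and lambda_bij: "\<forall>i\<in>{1..s}. \<forall>j\<ge>1. bij_betw (lam i j) (UNIV :: 'f set) {..<CARD('f)}"
    and alpha: "qadic_digits CARD('f) \<alpha>"
    and v_pos: "1 \<le> v"
    and v_coprime: "coprime v CARD('f)"
    and sd_def: "\<forall>n. is_qadic_seq_term CARD('f) v \<alpha> n (sd n)"
  shows "\<exists>K::real. \<forall>N\<ge>2.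
           real N * star_discrepancy s (\<lambda>n i. alg2_coord C \<psi> lam (sd n) i) N
             \<le> K * ln (real N) ^ s"
proof -
  interpret alg2_affine_input s t v C \<psi> lam \<alpha> sd
    by (rule alg2_affine_input.intro) (fact finite_row lin_indep psi_bij lambda_bij v_pos v_coprime sd_def)+
  show ?thesis
    using star_discrepancy_log_bound unfolding point_def .
qed

end
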